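(* Let $n\ge3$. Define the rescaled times, for $p\ge0$, $$T^{\alpha,p}=\frac{(2n-2)\Gamma\big(p+1+\frac{2\alpha-1}{2n-2}\big)}{\Gamma\big(\frac{2\alpha-1}{2n-2}\big)}t_{(2n-2)p+2\alpha-1}\ (\alpha=1,\dots,n-1),\qquad T^{n,p}=\frac{2\Gamma(p+\frac32)}{\Gamma(\frac12)}\hat t_{2p+1},$$ and the operators (summation over repeated $\alpha,\beta\in\{1,\dots,n\}$) $$L_{-1}=\sum_{p\ge1}T^{\alpha,p}\frac{\partial}{\partial T^{\alpha,p-1}}+\frac12\eta_{\alpha\beta}T^{\alpha,0}T^{\beta,0},\qquad L_0=\sum_{p\ge0}\big(p+\tfrac12+\mu_\alpha\big)T^{\alpha,p}\frac{\partial}{\partial T^{\alpha,p}}+\frac14\operatorname{tr}\big(\tfrac14-\mu^2\big),$$ $$L_1=\sum_{p\ge0}\big(p+\tfrac12+\mu_\alpha\big)\big(p+\tfrac32+\mu_\alpha\big)T^{\alpha,p}\frac{\partial}{\partial T^{\alpha,p+1}}+\frac12\eta^{\alpha\beta}\big(\tfrac12+\mu_\alpha\big)\big(\tfrac12+\mu_\beta\big)\frac{\partial^2}{\partial T^{\alpha,0}\partial T^{\beta,0}},$$ $$L_2=\sum_{p\ge0}\big(p+\tfrac12+\mu_\alpha\big)\big(p+\tfrac32+\mu_\alpha\big)\big(p+\tfrac52+\mu_\alpha\big)T^{\alpha,p}\frac{\partial}{\partial T^{\alpha,p+2}}+\eta^{\alpha\beta}\big(\tfrac12-\mu_\alpha\big)\big(\tfrac12-\mu_\beta\big)\big(\tfrac32-\mu_\beta\big)\frac{\partial^2}{\partial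 T^{\alpha,1}\partial T^{\beta,0}},$$ and for $j\ge2$ define $L_{j+1}=\frac1{1-j}[L_1,L_j]$. Then $L_j=V_j$ for all $j\ge-1$ (in particular for $j=-1,0,1,2$ by direct comparison, including the constant term of $L_0$).
   Context: $\mu=\operatorname{diag}(\mu_1,\dots,\mu_n)$ with $\mu_\alpha=\frac{2\alpha-n}{2n-2}$ for $\alpha=1,\dots,n-1$ and $\mu_n=0$; $\operatorname{tr}(\frac14-\mu^2)=\sum_\alpha(\frac14-\mu_\alpha^2)$. $\eta_{\alpha\beta}=\frac1{4n-4}\delta_{\alpha+\beta,n}+\frac14\delta_{\alpha n}\delta_{\beta n}$ ($\alpha,\beta=1,\dots,n$), and $(\eta^{\alpha\beta})$ is its inverse matrix. Here $t_k,\hat t_k$ ($k=1,3,5,\dots$) are the times of the Drinfeld–Sokolov hierarchy of type $D_n$, and $V_j=\frac1{8n-8}\sum_{i\in\mathbb Z}:p_ip_{(2n-2)j-i}:+\frac18\sum_{i\in\mathbb Z}:\hat p_i\hat p_{2j-i}:+\delta_{j0}\frac n{24}(1+\frac1{2n-2})$, where for odd $k>0$, $p_k=2\partial/\partial t_k$, $p_{-k}=kt_k$, $\hat p_k=2\partial/\partial\hat t_k$, $\hat p_{-k}=k\hat t_k$, $p_i=\hat p_i=0$ for even $i$, and the normal ordering $:\ :$ places $p_{k>0}$ to the right of $p_{k<0}$. The $V_j$ satisfy $[V_i,V_j]=(i-j)V_{i+j}+\delta_{i+j,0}\frac n{12}(i^3-i)$. *)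

theory Defs
  imports "HOL-Analysis.Analysis" "HOL-Library.Poly_Mapping" "HOL-Library.Groups_Big_Fun"
begin

text \<open>Variables: Tv k is t_k, Th k is hat t_k (only odd k are used).\<close>
datatype dvar = Tv nat | Th nat

text \<open>Formal power series in countably many variables, as coefficient functions on
  monomials (finitely supported exponent maps). Differential operators act on them.\<close>
type_synonym fps = "(dvar \<Rightarrow>\<^sub>0 nat) \<Rightarrow> real"
type_synonym op = "fps \<Rightarrow> fps"

definition mulv :: "dvar \<Rightarrow> op" where
  "mulv x f m = (if Poly_Mapping.lookup m x > 0 then f (Poly_Mapping.update x (Poly_Mapping.lookup m x - 1) m) else 0)"

definition dv :: "dvar \<Rightarrow> op" where
  "dv x f m = real (Poly_Mapping.lookup m x + 1) * f (m + Poly_Mapping.single x 1)"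

definition comm :: "op \<Rightarrow> op \<Rightarrow> op" where
  "comm A B f m = A (B f) m - B (A f) m"

definition mu :: "nat \<Rightarrow> nat \<Rightarrow> real" where
  "mu n a = (if a = n then 0 else (2 * real a - real n) / (2 * real n - 2))"

definition eta :: "nat \<Rightarrow> nat \<Rightarrow> nat \<Rightarrow> real" where
  "eta n a b = (if a + b = n then 1 / (4 * real n - 4) else 0)
             + (if a = n \<and> b = n then 1/4 else 0)"

definition eta_inv :: "nat \<Rightarrow> nat \<Rightarrow> nat \<Rightarrow> real" where
  "eta_inv n a b = (if a + b = n then 4 * real n - 4 else 0)
             + (if a = n \<and> b = n then 4 else 0)"

definition Tvar :: "nat \<Rightarrow> nat \<Rightarrow> nat \<Rightarrow> dvar" where
  "Tvar n a p = (if a = n then Th (2 * p + 1) else Tv ((2 * n - 2) * p + 2 * a - 1))"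

definition Tc :: "nat \<Rightarrow> nat \<Rightarrow> nat \<Rightarrow> real" where
  "Tc n a p = (if a = n then 2 * Gamma (real p + 3/2) / Gamma (1/2)
     else (2 * real n - 2) * Gamma (real p + 1 + (2 * real a - 1) / (2 * real n - 2))
            / Gamma ((2 * real a - 1) / (2 * real n - 2)))"

definition mT :: "nat \<Rightarrow> nat \<Rightarrow> nat \<Rightarrow> op" where
  "mT n a p f m = Tc n a p * mulv (Tvar n a p) f m"

definition dT :: "nat \<Rightarrow> nat \<Rightarrow> nat \<Rightarrow> op" where
  "dT n a p f m = dv (Tvar n a p) f m / Tc n a p"

definition Lm1 :: "nat \<Rightarrow> op" where
  "Lm1 n f m =
     (\<Sum>(a,p). if a \<in> {1..n} \<and> p \<ge> 1 then mT n a p (dT n a (p - 1) f) m else 0)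
   + (\<Sum>a\<in>{1..n}. \<Sum>b\<in>{1..n}. 1/2 * eta n a b * mT n a 0 (mT n b 0 f) m)"

definition L0 :: "nat \<Rightarrow> op" where
  "L0 n f m =
     (\<Sum>(a,p). if a \<in> {1..n} then (real p + 1/2 + mu n a) * mT n a p (dT n a p f) m else 0)
   + 1/4 * (\<Sum>a\<in>{1..n}. 1/4 - (mu n a)\<^sup>2) * f m"

definition L1 :: "nat \<Rightarrow> op" where
  "L1 n f m =
     (\<Sum>(a,p). if a \<in> {1..n} then (real p + 1/2 + mu n a) * (real p + 3/2 + mu n a)
                   * mT n a p (dT n a (p + 1) f) m else 0)
   + (\<Sum>a\<in>{1..n}. \<Sum>b\<in>{1..n}. 1/2 * eta_inv n a b * (1/2 + mu n a) * (1/2 + mu n b)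
                   * dT n a 0 (dT n b 0 f) m)"

definition L2 :: "nat \<Rightarrow> op" where
  "L2 n f m =
     (\<Sum>(a,p). if a \<in> {1..n} then (real p + 1/2 + mu n a) * (real p + 3/2 + mu n a)
                   * (real p + 5/2 + mu n a) * mT n a p (dT n a (p + 2) f) m else 0)
   + (\<Sum>a\<in>{1..n}. \<Sum>b\<in>{1..n}. eta_inv n a b * (1/2 - mu n a) * (1/2 - mu n b) * (3/2 - mu n b)
                   * dT n a 1 (dT n b 0 f) m)"

text \<open>Lhi n k = L_{k+2}; recursion L_{j+1} = 1/(1-j) [L_1, L_j] for j >= 2.\<close>
fun Lhi :: "nat \<Rightarrow> nat \<Rightarrow> op" where
  "Lhi n 0 = L2 n"
| "Lhi n (Suc k) = (\<lambda>f m. (1 / (1 - (real k + 2))) * comm (L1 n) (Lhi n k) f m)"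

definition Lop :: "nat \<Rightarrow> int \<Rightarrow> op" where
  "Lop n j = (if j = -1 then Lm1 n else if j = 0 then L0 n else if j = 1 then L1 n
              else Lhi n (nat (j - 2)))"

definition pop :: "(nat \<Rightarrow> dvar) \<Rightarrow> int \<Rightarrow> op" where
  "pop v i f m = (if even i then 0
      else if i > 0 then 2 * dv (v (nat i)) f m
      else real (nat (- i)) * mulv (v (nat (- i))) f m)"

text \<open>Normal ordered product :p_a p_b: (annihilators p_{k>0} to the right).\<close>
definition nop :: "(nat \<Rightarrow> dvar) \<Rightarrow> int \<Rightarrow> int \<Rightarrow> op" where
  "nop v a b = (if a > 0 \<and> b < 0 then pop v b \<circ> pop v a else pop v a \<circ> pop v b)"

definition Vop :: "nat \<Rightarrow> int \<Rightarrow> op" where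
  "Vop n j f m =
     Sum_any (\<lambda>i::int. 1 / (8 * real n - 8) * nop Tv i ((2 * int n - 2) * j - i) f m)
   + Sum_any (\<lambda>i::int. 1 / 8 * nop Th i (2 * j - i) f m)
   + (if j = 0 then real n / 24 * (1 + 1 / (2 * real n - 2)) * f m else 0)"

end

theory Submission
  imports Defs
begin

text \<open>
  Both sides are brought to a common normal form: for a family
  \<open>v\<close> of variables, a shift \<open>s\<close> and a bound \<open>B\<close>, the Euler operator
  \<open>E_{v,s} = \<Sum>_{k<B, k odd} k t_k \<partial>_{t_{k+s}}\<close> and the quadratic operator
  \<open>Q_{v,s} = \<Sum>_{i<s, i odd} \<partial>_{t_i} \<partial>_{t_{s-i}}\<close>.  At a monomial only finitely many variables occur,
  so every infinite sum reduces to such a finite one.  The development proceeds as follows.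
  \<^item> The Weyl relations between multiplication and differentiation give the commutators of
    \<open>E\<close> and \<open>Q\<close>; with a reflection identity for sums over odd indices this yields the Virasoro
    relation \<open>[V_1, V_j] = (1 - j) V_{j+1}\<close> on normal forms.
  \<^item> Normal ordering shows \<open>V_j = (Q + E)/M\<close> in each family (\<open>M = 2n-2\<close> for \<open>t\<close>, \<open>M = 2\<close> for \<open>\<hat>t\<close>)
    for \<open>j \<ge> 1\<close>, and gives explicit normal forms of \<open>V_0\<close> and \<open>V_{-1}\<close>.
  \<^item> By \<open>\<Gamma>(z+1) = z \<Gamma>(z)\<close> the rescaling of the times cancels the weights \<open>(p + 1/2 + \<mu>_a)\<dots>\<close>,
    and \<open>\<eta>\<close>, \<open>\<eta>^{-1}\<close> pair the index \<open>a\<close> with \<open>n - a\<close>; hence \<open>L_j = V_j\<close> for \<open>j = -1, 0, 1, 2\<close>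
    (for \<open>L_0\<close> the constant term is a sum of squares).
  \<^item> As \<open>L_{j+1} = [L_1, L_j]/(1 - j)\<close>, induction on \<open>j\<close> gives \<open>L_j = V_j\<close> for all \<open>j \<ge> -1\<close>.
  The argument works for every \<open>n \<ge> 2\<close>.
\<close>

section \<open>Weyl algebra relations for multiplication and differentiation\<close>

lemma update_dec_add_single:
  fixes m :: "dvar \<Rightarrow>\<^sub>0 nat"
  assumes "Poly_Mapping.lookup m x > 0"
  shows "Poly_Mapping.update x (Poly_Mapping.lookup m x - 1) m + Poly_Mapping.single x 1 = m"
proof (intro poly_mapping_eqI)
  fix k show "Poly_Mapping.lookup (Poly_Mapping.update x (Poly_Mapping.lookup m x - 1) m + Poly_Mapping.single x 1) k = Poly_Mapping.lookup m k"
    using assms by (cases "k = x") (auto simp: lookup_add lookup_update lookup_single)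
qed

lemma update_add_single:
  fixes m :: "dvar \<Rightarrow>\<^sub>0 nat" shows
  "Poly_Mapping.update x (Poly_Mapping.lookup m x) (m + Poly_Mapping.single x (Suc 0)) = m"
  by (intro poly_mapping_eqI) (auto simp: lookup_add lookup_update lookup_single when_def)

lemma update_add_single_comm:
  fixes m :: "dvar \<Rightarrow>\<^sub>0 nat"
  assumes "x \<noteq> y"
  shows "Poly_Mapping.update x (Poly_Mapping.lookup m x - 1) (m + Poly_Mapping.single y 1)
       = Poly_Mapping.update x (Poly_Mapping.lookup m x - 1) m + Poly_Mapping.single y 1"
  using assms by (intro poly_mapping_eqI) (auto simp: lookup_add lookup_update lookup_single when_def)

lemma update_update_comm:
  fixes m :: "dvar \<Rightarrow>\<^sub>0 nat"
  assumes "x \<noteq> y"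
  shows "Poly_Mapping.update x a (Poly_Mapping.update y b m)
       = Poly_Mapping.update y b (Poly_Mapping.update x a m)"
  using assms by (intro poly_mapping_eqI) (auto simp: lookup_update)

lemma dv_dv_comm: "dv x (dv y f) m = dv y (dv x f) m"
  by (auto simp: dv_def lookup_add lookup_single when_def ac_simps)

lemma mulv_mulv_comm: "mulv x (mulv y f) m = mulv y (mulv x f) m"
  by (cases "x = y") (auto simp: mulv_def lookup_update update_update_comm)

lemma dv_mulv_comm: "dv x (mulv y f) m = mulv y (dv x f) m + (if x = y then f m else 0)"
proof (cases "x = y")
  case True
  have L: "dv y (mulv y f) m = (real (Poly_Mapping.lookup m y) + 1) * f m"
    by (simp add: dv_def mulv_def lookup_add update_add_single)
  have R: "mulv y (dv y f) m = real (Poly_Mapping.lookup m y) * f m"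
  proof (cases "Poly_Mapping.lookup m y > 0")
    case True
    then show ?thesis
      by (simp add: dv_def mulv_def lookup_update of_nat_diff update_dec_add_single[OF True, simplified] add.commute[of "Poly_Mapping.single y (Suc 0)"])
  qed (simp add: mulv_def)
  show ?thesis using L R True by (simp add: algebra_simps)
next
  case False
  then show ?thesis
    by (auto simp: dv_def mulv_def lookup_add lookup_update lookup_single when_def update_add_single_comm[OF not_sym[OF False], simplified])
qed

lemma dv_dv_comm_fun: "dv x (dv y f) = dv y (dv x f)"
  by (rule ext) (rule dv_dv_comm)

lemma dv_mulv_comm_fun: "dv x (mulv y f) = (\<lambda>m. mulv y (dv x f) m + (if x = y then f m else 0))"
  by (rule ext) (rule dv_mulv_comm)

lemma dv_add: "dv x (\<lambda>m. g m + h m) = (\<lambda>m. dv x g m + dv x h m)"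
  by (rule ext) (simp add: dv_def algebra_simps)

lemma dv_diff: "dv x (\<lambda>m. g m - h m) = (\<lambda>m. dv x g m - dv x h m)"
  by (rule ext) (simp add: dv_def algebra_simps)

lemma dv_cm: "dv x (\<lambda>m. c * g m) = (\<lambda>m. c * dv x g m)"
  by (rule ext) (simp add: dv_def algebra_simps)

lemma dv_sum: "dv x (\<lambda>m. \<Sum>k\<in>S. g k m) = (\<lambda>m. \<Sum>k\<in>S. dv x (g k) m)"
  by (rule ext) (simp add: dv_def sum_distrib_left)

lemma dv_zero: "dv x (\<lambda>m. 0) = (\<lambda>m. 0)"
  by (rule ext) (simp add: dv_def)

lemma dv_if: "dv x (\<lambda>m. if P then g m else 0) = (\<lambda>m. if P then dv x g m else 0)"
  by (rule ext) (simp add: dv_def)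

lemma mulv_add: "mulv x (\<lambda>m. g m + h m) = (\<lambda>m. mulv x g m + mulv x h m)"
  by (rule ext) (simp add: mulv_def algebra_simps)

lemma mulv_diff: "mulv x (\<lambda>m. g m - h m) = (\<lambda>m. mulv x g m - mulv x h m)"
  by (rule ext) (simp add: mulv_def algebra_simps)

lemma mulv_cm: "mulv x (\<lambda>m. c * g m) = (\<lambda>m. c * mulv x g m)"
  by (rule ext) (simp add: mulv_def algebra_simps)

lemma mulv_sum: "mulv x (\<lambda>m. \<Sum>k\<in>S. g k m) = (\<lambda>m. \<Sum>k\<in>S. mulv x (g k) m)"
  by (rule ext) (simp add: mulv_def)

lemma mulv_zero: "mulv x (\<lambda>m. 0) = (\<lambda>m. 0)"
  by (rule ext) (simp add: mulv_def)

lemma mulv_if: "mulv x (\<lambda>m. if P then g m else 0) = (\<lambda>m. if P then mulv x g m else 0)"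
  by (rule ext) (simp add: mulv_def)

lemmas linear_simps = dv_add dv_diff dv_cm dv_sum dv_zero dv_if mulv_add mulv_diff mulv_cm mulv_sum mulv_zero mulv_if

lemma comm_mulv_dv_mulv_dv: "mulv a (dv b (mulv c (dv d f))) m - mulv c (dv d (mulv a (dv b f))) m
  = (if b = c then mulv a (dv d f) m else 0) - (if d = a then mulv c (dv b f) m else 0)"
proof -
  have lhs: "mulv a (dv b (mulv c (dv d f))) m = mulv a (mulv c (dv b (dv d f))) m
      + (if b = c then mulv a (dv d f) m else 0)"
    by (simp add: dv_mulv_comm_fun mulv_add mulv_if)
  have rhs: "mulv c (dv d (mulv a (dv b f))) m = mulv c (mulv a (dv d (dv b f))) m
      + (if d = a then mulv c (dv b f) m else 0)"
    by (simp add: dv_mulv_comm_fun mulv_add mulv_if)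
  have double_terms: "mulv a (mulv c (dv b (dv d f))) m = mulv c (mulv a (dv d (dv b f))) m"
    by (simp add: mulv_mulv_comm dv_dv_comm_fun)
  show ?thesis using lhs rhs double_terms by simp
qed

lemma comm_dv_dv_mulv_dv: "dv a (dv b (mulv c (dv d f))) m - mulv c (dv d (dv a (dv b f))) m
  = (if a = c then dv b (dv d f) m else 0) + (if b = c then dv a (dv d f) m else 0)"
proof -
  have lhs: "dv a (dv b (mulv c (dv d f))) m = mulv c (dv a (dv b (dv d f))) m
      + (if a = c then dv b (dv d f) m else 0) + (if b = c then dv a (dv d f) m else 0)"
    by (simp add: dv_mulv_comm_fun dv_add dv_if)
  have reorder: "dv a (dv b (dv d f)) = dv d (dv a (dv b f))"
    by (metis dv_dv_comm_fun)
  show ?thesis using lhs reorder by simp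
qed

lemma dv4_comm: "dv a (dv b (dv c (dv d f))) m = dv c (dv d (dv a (dv b f))) m"
  by (metis dv_dv_comm_fun)

section \<open>Normal-form operators\<close>

definition oddw :: "nat \<Rightarrow> real" where "oddw k = (if odd k then real k else 0)"

definition oddi :: "nat \<Rightarrow> real" where "oddi k = (if odd k then 1 else 0)"

definition euler_op :: "(nat \<Rightarrow> dvar) \<Rightarrow> nat \<Rightarrow> nat \<Rightarrow> op" where
  "euler_op v s B = (\<lambda>f m. \<Sum>k<B. oddw k * mulv (v k) (dv (v (k + s)) f) m)"

definition quad_op :: "(nat \<Rightarrow> dvar) \<Rightarrow> nat \<Rightarrow> op" where
  "quad_op v s = (\<lambda>f m. \<Sum>i<s. oddi i * dv (v i) (dv (v (s - i)) f) m)"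

lemma euler_comm_euler: "euler_op u s C (euler_op v t C f) m - euler_op v t C (euler_op u s C f) m
  = (\<Sum>k<C. \<Sum>l<C. oddw k * oddw l * ((if u (k+s) = v l then mulv (u k) (dv (v (l+t)) f) m else 0)
        - (if v (l+t) = u k then mulv (v l) (dv (u (k+s)) f) m else 0)))"
proof -
  have lhs: "euler_op u s C (euler_op v t C f) m = (\<Sum>k<C. \<Sum>l<C. oddw k * oddw l *
      mulv (u k) (dv (u (k+s)) (mulv (v l) (dv (v (l+t)) f))) m)"
    unfolding euler_op_def by (simp only: linear_simps sum_distrib_left mult.assoc)
  have rhs: "euler_op v t C (euler_op u s C f) m = (\<Sum>l<C. \<Sum>k<C. oddw l * oddw k *
      mulv (v l) (dv (v (l+t)) (mulv (u k) (dv (u (k+s)) f))) m)"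
    unfolding euler_op_def by (simp only: linear_simps sum_distrib_left mult.assoc)
  have rhs_swapped: "euler_op v t C (euler_op u s C f) m = (\<Sum>k<C. \<Sum>l<C. oddw k * oddw l *
      mulv (v l) (dv (v (l+t)) (mulv (u k) (dv (u (k+s)) f))) m)"
    unfolding rhs by (subst sum.swap) (simp only: mult.commute)
  show ?thesis unfolding lhs rhs_swapped sum_subtractf[symmetric] right_diff_distrib[symmetric] comm_mulv_dv_mulv_dv ..
qed

lemma quad_comm_euler: "quad_op u s (euler_op v t C f) m - euler_op v t C (quad_op u s f) m
  = (\<Sum>i<s. \<Sum>l<C. oddi i * oddw l * ((if u i = v l then dv (u (s-i)) (dv (v (l+t)) f) m else 0)
        + (if u (s-i) = v l then dv (u i) (dv (v (l+t)) f) m else 0)))"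
proof -
  have lhs: "quad_op u s (euler_op v t C f) m = (\<Sum>i<s. \<Sum>l<C. oddi i * oddw l *
      dv (u i) (dv (u (s-i)) (mulv (v l) (dv (v (l+t)) f))) m)"
    unfolding euler_op_def quad_op_def by (simp only: linear_simps sum_distrib_left mult.assoc)
  have rhs: "euler_op v t C (quad_op u s f) m = (\<Sum>l<C. \<Sum>i<s. oddw l * oddi i *
      mulv (v l) (dv (v (l+t)) (dv (u i) (dv (u (s-i)) f))) m)"
    unfolding euler_op_def quad_op_def by (simp only: linear_simps sum_distrib_left mult.assoc)
  have rhs_swapped: "euler_op v t C (quad_op u s f) m = (\<Sum>i<s. \<Sum>l<C. oddi i * oddw l *
      mulv (v l) (dv (v (l+t)) (dv (u i) (dv (u (s-i)) f))) m)"
    unfolding rhs by (subst sum.swap) (simp only: mult.commute)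
  show ?thesis unfolding lhs rhs_swapped sum_subtractf[symmetric] right_diff_distrib[symmetric] comm_dv_dv_mulv_dv ..
qed

lemma quad_quad_comm: "quad_op u s (quad_op v t f) m = quad_op v t (quad_op u s f) m"
proof -
  have lhs: "quad_op u s (quad_op v t f) m = (\<Sum>i<s. \<Sum>l<t. oddi i * oddi l *
      dv (u i) (dv (u (s-i)) (dv (v l) (dv (v (t-l)) f))) m)"
    unfolding quad_op_def by (simp only: linear_simps sum_distrib_left mult.assoc)
  have rhs: "quad_op v t (quad_op u s f) m = (\<Sum>l<t. \<Sum>i<s. oddi l * oddi i *
      dv (v l) (dv (v (t-l)) (dv (u i) (dv (u (s-i)) f))) m)"
    unfolding quad_op_def by (simp only: linear_simps sum_distrib_left mult.assoc)
  show ?thesis unfolding lhs rhs dv4_comm by (subst sum.swap) (simp only: mult.commute)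
qed

section \<open>A reflection identity for sums over odd indices\<close>

text \<open>For even \<open>K\<close>, \<open>i \<mapsto> K - i\<close> permutes the odd numbers below \<open>K\<close>.\<close>

lemma sum_oddi_from_1: "(\<Sum>i<K. oddi i * g i) = (\<Sum>i\<in>{1..<K}. oddi i * g i)"
proof (cases K)
  case 0 then show ?thesis by simp
next
  case (Suc K')
  have "{..<K} = insert 0 {1..<K}" using Suc by auto
  then show ?thesis by (simp add: oddi_def)
qed

lemma sum_oddi_reflect:
  assumes "even K"
  shows "(\<Sum>i<K. oddi i * g i) = (\<Sum>i<K. oddi i * g (K - i))"
proof -
  have "(\<Sum>i\<in>{1..<K}. oddi i * g i) = (\<Sum>i\<in>{1..<K}. oddi i * g (K - i))"
  proof (rule sum.reindex_bij_witness[where i="\<lambda>i. K - i" and j="\<lambda>i. K - i"])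
    fix a assume a: "a \<in> {1..<K}"
    then show "K - (K - a) = a" by auto
    show "K - a \<in> {1..<K}" using a by auto
    have "odd (K - a) \<longleftrightarrow> odd a" using a assms by (auto simp: even_diff_nat)
    then show "oddi (K - a) * g (K - (K - a)) = oddi a * g a" using a by (simp add: oddi_def)
  qed auto
  then show ?thesis by (simp add: sum_oddi_from_1)
qed

lemma sum_lessThan_shrink:
  fixes B C :: nat
  assumes "B \<le> C" "\<And>k. B \<le> k \<Longrightarrow> k < C \<Longrightarrow> g k = 0"
  shows "(\<Sum>k<C. g k) = (\<Sum>k<B. g k)"
proof (rule sum.mono_neutral_right)
  show "\<forall>i\<in>{..<C} - {..<B}. g i = 0"
  proof
    fix i assume "i \<in> {..<C} - {..<B}"
    then have "B \<le> i" "i < C" by auto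
    then show "g i = 0" by (rule assms(2))
  qed
qed (use assms(1) in auto)

lemma sum_lessThan_extend:
  fixes M S :: nat
  assumes "M \<le> S"
  shows "(\<Sum>i<M. h i) = (\<Sum>i<S. if i < M then h i else 0)"
proof -
  have "(\<Sum>i<S. if i < M then h i else 0) = (\<Sum>i<M. if i < M then h i else 0)"
    by (rule sum_lessThan_shrink[OF assms]) (auto dest: leD)
  then show ?thesis by simp
qed

text \<open>Symmetrizing a sum of pairs \<open>(i, L - i)\<close> of odd indices: each pair contributes
  \<open>i + (L - i)\<close>, which redistributes to weight \<open>2(L - i)\<close> at index \<open>i\<close>.\<close>

lemma sum_odd_weighted_pairs:
  fixes P :: "nat \<Rightarrow> real"
  assumes "even L"
  shows "(\<Sum>i<L. oddi i * (oddw i * P (L - i) + oddw (L - i) * P i))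
       = (\<Sum>i<L. oddi i * (2 * (real L - real i) * P i))"
proof -
  have "(\<Sum>i<L. oddi i * (oddw i * P (L - i))) = (\<Sum>i<L. oddi i * (oddw (L - i) * P (L - (L - i))))"
    by (rule sum_oddi_reflect[OF assms])
  also have "\<dots> = (\<Sum>i<L. oddi i * (oddw (L - i) * P i))"
    by (rule sum.cong) auto
  finally have reflected: "(\<Sum>i<L. oddi i * (oddw i * P (L - i))) = (\<Sum>i<L. oddi i * (oddw (L - i) * P i))" .
  have odd_weight: "oddi i * (oddw (L - i) * P i) = oddi i * ((real L - real i) * P i)" if "i < L" for i
    using that assms by (auto simp: oddi_def oddw_def even_diff_nat of_nat_diff)
  have "(\<Sum>i<L. oddi i * (oddw i * P (L - i) + oddw (L - i) * P i))
      = (\<Sum>i<L. oddi i * (oddw i * P (L - i))) + (\<Sum>i<L. oddi i * (oddw (L - i) * P i))"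
    by (simp add: distrib_left sum.distrib)
  also have "\<dots> = 2 * (\<Sum>i<L. oddi i * (oddw (L - i) * P i))" using reflected by simp
  also have "\<dots> = 2 * (\<Sum>i<L. oddi i * ((real L - real i) * P i))"
    by (intro arg_cong[where f="\<lambda>x. 2 * x"] sum.cong refl) (simp add: odd_weight)
  finally show ?thesis by (simp add: sum_distrib_left algebra_simps)
qed

lemma sum_oddi_symmetrize:
  fixes g P :: "nat \<Rightarrow> real"
  assumes S: "even S" and sym: "\<And>a. a \<le> S \<Longrightarrow> P a = P (S - a)"
  shows "2 * (\<Sum>i<S. oddi i * (g i * P i)) = (\<Sum>i<S. oddi i * ((g i + g (S - i)) * P i))"
proof -
  have "(\<Sum>i<S. oddi i * (g i * P i)) = (\<Sum>i<S. oddi i * (g (S - i) * P (S - i)))"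
    by (rule sum_oddi_reflect[OF S])
  also have "\<dots> = (\<Sum>i<S. oddi i * (g (S - i) * P i))"
  proof (rule sum.cong[OF refl])
    fix i assume "i \<in> {..<S}"
    then have "P (S - i) = P i" using sym[of i] by simp
    then show "oddi i * (g (S - i) * P (S - i)) = oddi i * (g (S - i) * P i)" by simp
  qed
  finally have reflected: "(\<Sum>i<S. oddi i * (g i * P i)) = (\<Sum>i<S. oddi i * (g (S - i) * P i))" .
  show ?thesis
    by (subst mult_2, subst (2) reflected) (simp add: sum.distrib[symmetric] algebra_simps)
qed

text \<open>The key arithmetic identity behind \<open>[Q_M, E_K] - [Q_K, E_M] = (M - K) Q_{M+K}\<close>: weights
  \<open>2(M - i)\<close> and \<open>2(K - i)\<close> summed over an odd \<open>i\<close> and its reflection \<open>M + K - i\<close> give \<open>2(M - K)\<close>.\<close>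

lemma reflection_weights:
  fixes M K i :: nat
  assumes "M \<le> K" "odd i" "even M" "even K" "i < M + K"
  defines "g \<equiv> \<lambda>x::nat. (if x < M then 2 * (real M - real x) else 0) - (if x < K then 2 * (real K - real x) else 0)"
  shows "g i + g (M + K - i) = 2 * (real M - real K)"
proof -
  have "i \<noteq> M" "i \<noteq> K" using assms by auto
  then show ?thesis using assms(1,5) unfolding g_def by (auto simp: of_nat_diff)
qed

lemma reflection_identity:
  fixes M K :: nat and P :: "nat \<Rightarrow> real"
  assumes "M \<le> K" "even M" "even K"
    and sym: "\<And>a. a \<le> M + K \<Longrightarrow> P a = P (M + K - a)"
  shows "(\<Sum>i<M. oddi i * (oddw i * P (M - i) + oddw (M - i) * P i))
       - (\<Sum>i<K. oddi i * (oddw i * P (K - i) + oddw (K - i) * P i))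
       = (real M - real K) * (\<Sum>i<M+K. oddi i * P i)"
proof -
  define S where "S = M + K"
  define g where "g \<equiv> \<lambda>x::nat. (if x < M then 2 * (real M - real x) else 0) - (if x < K then 2 * (real K - real x) else 0)"
  have difference: "(\<Sum>i<M. oddi i * (oddw i * P (M - i) + oddw (M - i) * P i))
       - (\<Sum>i<K. oddi i * (oddw i * P (K - i) + oddw (K - i) * P i)) = (\<Sum>i<S. oddi i * (g i * P i))"
  proof -
    have "(\<Sum>i<M. oddi i * (2 * (real M - real i) * P i)) = (\<Sum>i<S. if i < M then oddi i * (2 * (real M - real i) * P i) else 0)"
      by (rule sum_lessThan_extend) (simp add: S_def)
    moreover have "(\<Sum>i<K. oddi i * (2 * (real K - real i) * P i)) = (\<Sum>i<S. if i < K then oddi i * (2 * (real K - real i) * P i) else 0)"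
      by (rule sum_lessThan_extend) (simp add: S_def)
    moreover have "(\<Sum>i<S. oddi i * (g i * P i)) = (\<Sum>i<S. if i < M then oddi i * (2 * (real M - real i) * P i) else 0)
       - (\<Sum>i<S. if i < K then oddi i * (2 * (real K - real i) * P i) else 0)"
      unfolding sum_subtractf[symmetric] g_def by (rule sum.cong) (auto simp: algebra_simps)
    ultimately show ?thesis
      unfolding sum_odd_weighted_pairs[OF \<open>even M\<close>] sum_odd_weighted_pairs[OF \<open>even K\<close>] by simp
  qed
  have evS: "even S" unfolding S_def using \<open>even M\<close> \<open>even K\<close> by simp
  have symS: "\<And>a. a \<le> S \<Longrightarrow> P a = P (S - a)" using sym unfolding S_def .
  have "2 * (\<Sum>i<S. oddi i * (g i * P i)) = (\<Sum>i<S. oddi i * ((g i + g (S - i)) * P i))"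
    by (rule sum_oddi_symmetrize[where P=P, OF evS symS])
  also have "\<dots> = (\<Sum>i<S. oddi i * (2 * (real M - real K) * P i))"
  proof (rule sum.cong)
    fix i assume i: "i \<in> {..<S}"
    show "oddi i * ((g i + g (S - i)) * P i) = oddi i * (2 * (real M - real K) * P i)"
    proof (cases "odd i")
      case True
      then show ?thesis using reflection_weights[of M K i] i assms(1-3) unfolding g_def S_def by simp
    qed (simp add: oddi_def)
  qed simp
  also have "\<dots> = 2 * ((real M - real K) * (\<Sum>i<S. oddi i * P i))"
    by (simp add: sum_distrib_left algebra_simps)
  finally show ?thesis using difference unfolding S_def by simp
qed

text \<open>Normal-form operators at \<open>m\<close> only see coefficients supported below a slightly larger bound.\<close>

definition supp_below :: "nat \<Rightarrow> (dvar \<Rightarrow>\<^sub>0 nat) \<Rightarrow> bool" where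
  "supp_below B m \<longleftrightarrow> (\<forall>k\<ge>B. Poly_Mapping.lookup m (Tv k) = 0 \<and> Poly_Mapping.lookup m (Th k) = 0)"

definition is_family :: "(nat \<Rightarrow> dvar) \<Rightarrow> bool" where "is_family v \<longleftrightarrow> v = Tv \<or> v = Th"

definition agree_on_supp :: "nat \<Rightarrow> fps \<Rightarrow> fps \<Rightarrow> bool" where
  "agree_on_supp C g g' \<longleftrightarrow> (\<forall>m. supp_below C m \<longrightarrow> g m = g' m)"

fun var_index :: "dvar \<Rightarrow> nat" where "var_index (Tv k) = k" | "var_index (Th k) = k"

lemma supp_below_exists: "\<exists>B. supp_below B m"
proof -
  define B where "B = Suc (\<Sum>x\<in>Poly_Mapping.keys m. var_index x)"
  have "Poly_Mapping.lookup m x = 0" if "B \<le> var_index x" for x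
  proof (rule ccontr)
    assume "Poly_Mapping.lookup m x \<noteq> 0"
    then have "x \<in> Poly_Mapping.keys m" by (simp add: in_keys_iff)
    then have "var_index x \<le> (\<Sum>x\<in>Poly_Mapping.keys m. var_index x)" by (intro member_le_sum) auto
    then show False using that unfolding B_def by simp
  qed
  then have "supp_below B m" unfolding supp_below_def by (metis var_index.simps)
  then show ?thesis ..
qed

lemma supp_below_mono: "supp_below B m \<Longrightarrow> B \<le> C \<Longrightarrow> supp_below C m"
  unfolding supp_below_def by auto

lemma family_inj: "is_family v \<Longrightarrow> v a = v b \<longleftrightarrow> a = b"
  unfolding is_family_def by auto

lemma supp_below_lookup: "supp_below B m \<Longrightarrow> is_family v \<Longrightarrow> B \<le> k \<Longrightarrow> Poly_Mapping.lookup m (v k) = 0"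
  unfolding supp_below_def is_family_def by auto

lemma supp_below_add_single: "supp_below C m \<Longrightarrow> is_family v \<Longrightarrow> k < C \<Longrightarrow> supp_below C (m + Poly_Mapping.single (v k) (Suc 0))"
  unfolding supp_below_def is_family_def by (auto simp: lookup_add lookup_single when_def)

lemma supp_below_update: "supp_below C m \<Longrightarrow> supp_below C (Poly_Mapping.update x (Poly_Mapping.lookup m x - Suc 0) m)"
  unfolding supp_below_def by (auto simp: lookup_update)

lemma mulv_outside_supp: "Poly_Mapping.lookup m x = 0 \<Longrightarrow> mulv x g m = 0"
  by (simp add: mulv_def)

lemma agree_on_supp_dv: "agree_on_supp C g g' \<Longrightarrow> is_family v \<Longrightarrow> k < C \<Longrightarrow> agree_on_supp C (dv (v k) g) (dv (v k) g')"
  unfolding agree_on_supp_def dv_def by (auto simp: supp_below_add_single)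

lemma agree_on_supp_mulv: "agree_on_supp C g g' \<Longrightarrow> agree_on_supp C (mulv x g) (mulv x g')"
  unfolding agree_on_supp_def mulv_def by (auto simp: supp_below_update)

lemma euler_agree:
  assumes "is_family v" "supp_below B m" "B + s \<le> C" "agree_on_supp C g g'"
  shows "euler_op v s B g m = euler_op v s B g' m"
  unfolding euler_op_def
proof (rule sum.cong)
  fix k assume "k \<in> {..<B}"
  then have "agree_on_supp C (mulv (v k) (dv (v (k + s)) g)) (mulv (v k) (dv (v (k + s)) g'))"
    using assms by (intro agree_on_supp_mulv agree_on_supp_dv) auto
  moreover have "supp_below C m" using assms supp_below_mono by auto
  ultimately show "oddw k * mulv (v k) (dv (v (k + s)) g) m = oddw k * mulv (v k) (dv (v (k + s)) g') m"
    unfolding agree_on_supp_def by auto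
qed simp

lemma quad_agree:
  assumes "is_family v" "supp_below C m" "s < C" "agree_on_supp C g g'"
  shows "quad_op v s g m = quad_op v s g' m"
  unfolding quad_op_def
proof (rule sum.cong)
  fix i assume "i \<in> {..<s}"
  then have "agree_on_supp C (dv (v i) (dv (v (s - i)) g)) (dv (v i) (dv (v (s - i)) g'))"
    using assms by (intro agree_on_supp_dv) auto
  then show "oddi i * dv (v i) (dv (v (s - i)) g) m = oddi i * dv (v i) (dv (v (s - i)) g') m"
    using assms unfolding agree_on_supp_def by auto
qed simp

lemma euler_bound_irrelevant:
  assumes "is_family v" "supp_below B m" "B \<le> C"
  shows "euler_op v s C g m = euler_op v s B g m"
  unfolding euler_op_def
  by (rule sum_lessThan_shrink[OF assms(3)]) (simp add: mulv_outside_supp supp_below_lookup[OF assms(2,1)])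

text \<open>The normal form \<open>(Q_{v,Mj} + E_{v,Mj})/M\<close> of the \<open>j\<close>-th Virasoro operator of one family.\<close>

definition vir_op :: "(nat \<Rightarrow> dvar) \<Rightarrow> nat \<Rightarrow> nat \<Rightarrow> nat \<Rightarrow> op" where
  "vir_op v M j B = (\<lambda>f m. 1 / real M * quad_op v (M * j) f m + 1 / real M * euler_op v (M * j) B f m)"

lemma vir_agree:
  assumes "is_family v" "supp_below B m" "B + M * j \<le> C" "M * j < C" "agree_on_supp C g g'"
  shows "vir_op v M j B g m = vir_op v M j B g' m"
  unfolding vir_op_def using euler_agree[OF assms(1,2,3,5)] quad_agree[OF assms(1) _ assms(4,5)]
    supp_below_mono[OF assms(2)] assms(3) by auto

lemma vir_bound_irrelevant:
  assumes "is_family v" "supp_below B m" "B \<le> C"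
  shows "vir_op v M j C g m = vir_op v M j B g m"
  unfolding vir_op_def using euler_bound_irrelevant[OF assms] by simp

lemma quad_linear: "quad_op v s (\<lambda>m. a * g m + b * h m) m0 = a * quad_op v s g m0 + b * quad_op v s h m0"
  unfolding quad_op_def by (simp add: linear_simps sum.distrib sum_distrib_left algebra_simps)

lemma euler_linear: "euler_op v s B (\<lambda>m. a * g m + b * h m) m0 = a * euler_op v s B g m0 + b * euler_op v s B h m0"
  unfolding euler_op_def by (simp add: linear_simps sum.distrib sum_distrib_left algebra_simps)

lemma vir_add: "vir_op v M j B (\<lambda>m. g m + h m) m0 = vir_op v M j B g m0 + vir_op v M j B h m0"
  using quad_linear[of v "M*j" 1 g 1 h m0] euler_linear[of v "M*j" B 1 g 1 h m0]
  unfolding vir_op_def by (simp add: algebra_simps)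

section \<open>The Virasoro relation in normal form\<close>

lemma sum_delta_mult:
  fixes c X :: "'a \<Rightarrow> real"
  assumes "finite S"
  shows "(\<Sum>l\<in>S. c l * (if a = l then X l else 0)) = (if a \<in> S then c a * X a else 0)"
proof -
  have "(\<Sum>l\<in>S. c l * (if a = l then X l else 0)) = (\<Sum>l\<in>S. if a = l then c l * X l else 0)"
    by (rule sum.cong) auto
  then show ?thesis using assms by simp
qed

lemma sum_two_deltas:
  fixes c F G :: "'a \<Rightarrow> real"
  assumes "finite S"
  shows "(\<Sum>l\<in>S. c l * ((if a = l then F l else 0) + (if b = l then G l else 0)))
       = (if a \<in> S then c a * F a else 0) + (if b \<in> S then c b * G b else 0)"
  using assms by (simp add: distrib_left sum.distrib sum_delta_mult)

lemma quad_comm_euler_same: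
  assumes v: "is_family v" and sC: "s < C"
  shows "quad_op v s (euler_op v t C f) m - euler_op v t C (quad_op v s f) m
    = (\<Sum>i<s. oddi i * (oddw i * dv (v (s - i)) (dv (v (s + t - (s - i))) f) m
                      + oddw (s - i) * dv (v i) (dv (v (s + t - i)) f) m))"
proof -
  have "quad_op v s (euler_op v t C f) m - euler_op v t C (quad_op v s f) m
     = (\<Sum>i<s. oddi i * (\<Sum>l<C. oddw l * ((if i = l then dv (v (s-i)) (dv (v (l+t)) f) m else 0)
        + (if s - i = l then dv (v i) (dv (v (l+t)) f) m else 0))))"
    unfolding quad_comm_euler family_inj[OF v] by (simp add: sum_distrib_left mult.assoc)
  also have "\<dots> = (\<Sum>i<s. oddi i * (oddw i * dv (v (s - i)) (dv (v (s + t - (s - i))) f) m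
                      + oddw (s - i) * dv (v i) (dv (v (s + t - i)) f) m))"
  proof (rule sum.cong)
    fix i assume i: "i \<in> {..<s}"
    have "s + t - (s - i) = i + t" "s + t - i = s - i + t" using i by auto
    then show "oddi i * (\<Sum>l<C. oddw l * ((if i = l then dv (v (s-i)) (dv (v (l+t)) f) m else 0)
        + (if s - i = l then dv (v i) (dv (v (l+t)) f) m else 0)))
      = oddi i * (oddw i * dv (v (s - i)) (dv (v (s + t - (s - i))) f) m
                      + oddw (s - i) * dv (v i) (dv (v (s + t - i)) f) m)"
      using i sC by (subst sum_two_deltas) (auto simp: add.commute[of t i])
  qed simp
  finally show ?thesis .
qed

lemma euler_comm_euler_same:
  assumes v: "is_family v" and B: "supp_below B m" and C: "B + s + t \<le> C" and ev: "even s" "even t"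
  shows "euler_op v s C (euler_op v t C f) m - euler_op v t C (euler_op v s C f) m = (real s - real t) * euler_op v (s + t) B f m"
proof -
  define XD where "XD = (\<lambda>k l. mulv (v k) (dv (v l) f) m)"
  have diag_left: "(\<Sum>k<C. \<Sum>l<C. oddw k * oddw l * (if k + s = l then XD k (l + t) else 0))
      = (\<Sum>k<C. if k + s < C then oddw k * oddw (k + s) * XD k (k + s + t) else 0)"
    by (simp add: sum_delta_mult)
  have diag_right: "(\<Sum>k<C. \<Sum>l<C. oddw k * oddw l * (if l + t = k then XD l (k + s) else 0))
      = (\<Sum>l<C. if l + t < C then oddw (l + t) * oddw l * XD l (l + t + s) else 0)"
    by (subst sum.swap) (simp add: sum_delta_mult)
  have "euler_op v s C (euler_op v t C f) m - euler_op v t C (euler_op v s C f) m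
     = (\<Sum>k<C. \<Sum>l<C. oddw k * oddw l * (if k + s = l then XD k (l + t) else 0))
     - (\<Sum>k<C. \<Sum>l<C. oddw k * oddw l * (if l + t = k then XD l (k + s) else 0))"
    unfolding euler_comm_euler family_inj[OF v] XD_def
    by (simp add: sum_subtractf[symmetric] right_diff_distrib)
  also have "\<dots> = (\<Sum>k<C. (if k + s < C then oddw k * oddw (k + s) * XD k (k + s + t) else 0)
       - (if k + t < C then oddw (k + t) * oddw k * XD k (k + t + s) else 0))"
    unfolding diag_left diag_right sum_subtractf ..
  also have "\<dots> = (\<Sum>k<B. (if k + s < C then oddw k * oddw (k + s) * XD k (k + s + t) else 0)
       - (if k + t < C then oddw (k + t) * oddw k * XD k (k + t + s) else 0))"
    using C by (intro sum_lessThan_shrink) (auto simp: XD_def mulv_outside_supp supp_below_lookup[OF B v])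
  also have "\<dots> = (\<Sum>k<B. (real s - real t) * (oddw k * mulv (v k) (dv (v (k + (s + t))) f) m))"
  proof (rule sum.cong)
    fix k assume k: "k \<in> {..<B}"
    then have "k + s < C" "k + t < C" using C by auto
    moreover have assoc1: "k + s + t = k + (s + t)" and assoc2: "k + t + s = k + (s + t)" by auto
    moreover have w: "oddw k * oddw (k + s) - oddw (k + t) * oddw k = (real s - real t) * oddw k"
      using ev by (auto simp: oddw_def algebra_simps)
    moreover have "\<And>X. oddw k * oddw (k + s) * X - oddw (k + t) * oddw k * X = (real s - real t) * (oddw k * X)"
      using w by (metis left_diff_distrib mult.assoc)
    ultimately show "(if k + s < C then oddw k * oddw (k + s) * XD k (k + s + t) else 0)
       - (if k + t < C then oddw (k + t) * oddw k * XD k (k + t + s) else 0)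
       = (real s - real t) * (oddw k * mulv (v k) (dv (v (k + (s + t))) f) m)"
      unfolding XD_def assoc1 assoc2 by simp
  qed simp
  also have "\<dots> = (real s - real t) * euler_op v (s + t) B f m"
    unfolding euler_op_def by (simp add: sum_distrib_left)
  finally show ?thesis .
qed

text \<open>Expanding
  \<open>V_1 V_j\<close> and \<open>V_j V_1\<close> gives four terms \<open>a_i\<close> and \<open>b_i\<close> each: the \<open>QQ\<close> terms cancel, the \<open>EE\<close>
  terms give \<open>(M - K) E_{M+K}\<close>, and the mixed terms give \<open>(M - K) Q_{M+K}\<close> by the reflection identity.\<close>

lemma vir_comm_same_family:
  assumes v: "is_family v" and M: "even M" "0 < M" and j: "1 \<le> j" and B: "supp_below B m"
    and C: "B + M * (j + 1) \<le> C" "M * (j + 1) < C"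
  shows "vir_op v M 1 C (vir_op v M j C f) m - vir_op v M j C (vir_op v M 1 C f) m = (1 - real j) * vir_op v M (j + 1) B f m"
proof -
  define K where "K = M * j"
  have MK: "M * (j + 1) = M + K" unfolding K_def by (simp add: algebra_simps)
  have evK: "even K" unfolding K_def using M by simp
  have MleK: "M \<le> K" unfolding K_def using j by simp
  define a1 where "a1 = quad_op v M (quad_op v K f) m"
  define a2 where "a2 = quad_op v M (euler_op v K C f) m"
  define a3 where "a3 = euler_op v M C (quad_op v K f) m"
  define a4 where "a4 = euler_op v M C (euler_op v K C f) m"
  define b1 where "b1 = quad_op v K (quad_op v M f) m"
  define b2 where "b2 = quad_op v K (euler_op v M C f) m"
  define b3 where "b3 = euler_op v K C (quad_op v M f) m"
  define b4 where "b4 = euler_op v K C (euler_op v M C f) m"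
  have V1_Vj: "vir_op v M 1 C (vir_op v M j C f) m = 1 / real M * (1 / real M * a1 + 1 / real M * a2)
      + 1 / real M * (1 / real M * a3 + 1 / real M * a4)"
    unfolding vir_op_def a1_def a2_def a3_def a4_def K_def by (simp only: quad_linear euler_linear mult_1_right)
  have Vj_V1: "vir_op v M j C (vir_op v M 1 C f) m = 1 / real M * (1 / real M * b1 + 1 / real M * b2)
      + 1 / real M * (1 / real M * b3 + 1 / real M * b4)"
    unfolding vir_op_def b1_def b2_def b3_def b4_def K_def by (simp only: quad_linear euler_linear mult_1_right)
  have Vj1: "vir_op v M (j + 1) B f m = 1 / real M * quad_op v (M + K) f m + 1 / real M * euler_op v (M + K) B f m"
    unfolding vir_op_def MK ..
  define P where "P = (\<lambda>a. dv (v a) (dv (v (M + K - a)) f) m)"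
  have quad_terms: "a1 = b1" unfolding a1_def b1_def by (rule quad_quad_comm)
  have mixed_M: "a2 - b3 = (\<Sum>i<M. oddi i * (oddw i * P (M - i) + oddw (M - i) * P i))"
    unfolding a2_def b3_def P_def using C MK by (subst quad_comm_euler_same[OF v]) auto
  have mixed_K: "b2 - a3 = (\<Sum>i<K. oddi i * (oddw i * P (K - i) + oddw (K - i) * P i))"
    unfolding b2_def a3_def P_def using C MK by (subst quad_comm_euler_same[OF v]) (auto simp: add.commute)
  have euler_terms: "a4 - b4 = (real M - real K) * euler_op v (M + K) B f m"
    unfolding a4_def b4_def using C MK M evK by (intro euler_comm_euler_same[OF v B]) auto
  have sym: "P a = P (M + K - a)" if "a \<le> M + K" for a
    unfolding P_def using that by (simp add: dv_dv_comm)
  have quad_reflection: "(\<Sum>i<M. oddi i * (oddw i * P (M - i) + oddw (M - i) * P i))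
       - (\<Sum>i<K. oddi i * (oddw i * P (K - i) + oddw (K - i) * P i))
       = (real M - real K) * quad_op v (M + K) f m"
    by (subst reflection_identity[where P=P, OF MleK M(1) evK sym]) (simp_all add: quad_op_def P_def)
  have "vir_op v M 1 C (vir_op v M j C f) m - vir_op v M j C (vir_op v M 1 C f) m
     = 1 / (real M * real M) * ((a2 - b3) - (b2 - a3) + (a4 - b4))"
    unfolding V1_Vj Vj_V1 quad_terms using M by (simp add: field_simps)
  also have "\<dots> = 1 / (real M * real M) * ((real M - real K) * (quad_op v (M + K) f m + euler_op v (M + K) B f m))"
  proof -
    have "(a2 - b3) - (b2 - a3) = (real M - real K) * quad_op v (M + K) f m"
      unfolding mixed_M mixed_K quad_reflection ..
    then show ?thesis unfolding euler_terms by (simp only: distrib_left)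
  qed
  also have "\<dots> = (1 - real j) * vir_op v M (j + 1) B f m"
    unfolding Vj1 K_def using M by (simp add: field_simps)
  finally show ?thesis .
qed

lemma vir_comm_distinct_families:
  assumes uv: "\<And>k l. u k \<noteq> v l"
  shows "vir_op u M a C (vir_op v M' b C f) m = vir_op v M' b C (vir_op u M a C f) m"
proof -
  have uv': "\<And>k l. v l \<noteq> u k" using uv by metis
  have qq: "quad_op u s (quad_op v t f) m = quad_op v t (quad_op u s f) m" for s t by (rule quad_quad_comm)
  have qe: "quad_op u s (euler_op v t C f) m = euler_op v t C (quad_op u s f) m" for s t
    using quad_comm_euler[of u s v t C f m] by (simp add: uv uv')
  have eq: "euler_op u s C (quad_op v t f) m = quad_op v t (euler_op u s C f) m" for s t
    using quad_comm_euler[of v t u s C f m] by (simp add: uv uv')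
  have ee: "euler_op u s C (euler_op v t C f) m = euler_op v t C (euler_op u s C f) m" for s t
    using euler_comm_euler[of u s C v t f m] by (simp add: uv uv')
  show ?thesis unfolding vir_op_def by (simp only: quad_linear euler_linear qq qe eq ee) (simp add: algebra_simps)
qed

section \<open>Normal form of the operators \<open>V_j\<close>\<close>

text \<open>Splitting \<open>:p_i p_{s-i}:\<close> into its mixed part (one creation, one annihilation operator) and its
  pure part (two annihilators if \<open>s > 0\<close>, two creators if \<open>s < 0\<close>).\<close>

definition mixed_term :: "(nat \<Rightarrow> dvar) \<Rightarrow> int \<Rightarrow> fps \<Rightarrow> (dvar \<Rightarrow>\<^sub>0 nat) \<Rightarrow> int \<Rightarrow> real" where
  "mixed_term v s f m k = (if 0 < k \<and> 0 < k + s \<and> odd k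
     then 2 * real_of_int k * mulv (v (nat k)) (dv (v (nat (k + s))) f) m else 0)"

definition quad_term :: "(nat \<Rightarrow> dvar) \<Rightarrow> int \<Rightarrow> fps \<Rightarrow> (dvar \<Rightarrow>\<^sub>0 nat) \<Rightarrow> int \<Rightarrow> real" where
  "quad_term v s f m i = (if 0 < i \<and> i < s \<and> odd i then 4 * dv (v (nat i)) (dv (v (nat (s - i))) f) m else 0)
     + (if s < i \<and> i < 0 \<and> odd i then real_of_int (- i) * real_of_int (i - s)
          * mulv (v (nat (- i))) (mulv (v (nat (i - s))) f) m else 0)"

lemma pop_even: "even a \<Longrightarrow> pop v a f = (\<lambda>m. 0)"
  by (rule ext) (simp add: pop_def)

lemma pop_pos: "odd a \<Longrightarrow> 0 < a \<Longrightarrow> pop v a f = (\<lambda>m. 2 * dv (v (nat a)) f m)"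
  by (rule ext) (simp add: pop_def)

lemma pop_neg: "odd a \<Longrightarrow> a < 0 \<Longrightarrow> pop v a f = (\<lambda>m. real (nat (- a)) * mulv (v (nat (- a))) f m)"
  by (rule ext) (simp add: pop_def)

lemma nop_split:
  assumes s: "even s"
  shows "nop v i (s - i) f m = mixed_term v s f m (i - s) + mixed_term v s f m (- i) + quad_term v s f m i"
proof (cases "even i")
  case True
  then have "even (s - i)" using s by simp
  then show ?thesis using True s by (simp add: nop_def pop_even pop_def mixed_term_def quad_term_def)
next
  case odd: False
  then have odd2: "odd (s - i)" "odd (i - s)" using s by auto
  have i0: "i \<noteq> 0" "s - i \<noteq> 0" using odd odd2 by auto
  consider "0 < i" "s - i < 0" | "i < 0" "0 < s - i" | "0 < i" "0 < s - i" | "i < 0" "s - i < 0"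
    using i0 by linarith
  then show ?thesis using odd odd2
    by cases (simp_all add: nop_def pop_pos pop_neg pop_def mixed_term_def quad_term_def mulv_cm dv_cm)
qed

lemma Sum_any_const_mult: "Sum_any (\<lambda>i. (c::real) * g i) = c * Sum_any g"
proof (cases "c = 0")
  case False
  then have "{i. c * g i \<noteq> 0} = {i. g i \<noteq> 0}" by auto
  then show ?thesis by (simp add: Sum_any.expand_set sum_distrib_left)
qed simp

lemma mixed_term_supp:
  assumes v: "is_family v" and B: "supp_below B m"
  shows "{k. mixed_term v s f m k \<noteq> 0} \<subseteq> int ` {..<B}"
proof
  fix k assume "k \<in> {k. mixed_term v s f m k \<noteq> 0}"
  then have k: "0 < k" "mulv (v (nat k)) (dv (v (nat (k + s))) f) m \<noteq> 0"
    by (auto simp: mixed_term_def split: if_splits)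
  then have "Poly_Mapping.lookup m (v (nat k)) \<noteq> 0" using mulv_outside_supp by metis
  then have "nat k < B" using supp_below_lookup[OF B v] not_le by metis
  then show "k \<in> int ` {..<B}" using k(1) by (intro image_eqI[of _ _ "nat k"]) auto
qed

lemma quad_term_supp: "{i. quad_term v s f m i \<noteq> 0} \<subseteq> {-\<bar>s\<bar>..\<bar>s\<bar>}"
  by (auto simp: quad_term_def split: if_splits)

lemma Sum_any_mixed_term:
  assumes v: "is_family v" and B: "supp_below B m"
  shows "Sum_any (mixed_term v s f m) = (\<Sum>k<B. mixed_term v s f m (int k))"
proof -
  have "Sum_any (mixed_term v s f m) = sum (mixed_term v s f m) (int ` {..<B})"
    by (rule Sum_any.expand_superset[OF _ mixed_term_supp[OF v B]]) simp
  also have "\<dots> = (\<Sum>k<B. mixed_term v s f m (int k))"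
    by (subst sum.reindex) auto
  finally show ?thesis .
qed

lemma Sum_any_nop:
  assumes v: "is_family v" and B: "supp_below B m" and s: "even s"
  shows "Sum_any (\<lambda>i. nop v i (s - i) f m) = 2 * (\<Sum>k<B. mixed_term v s f m (int k)) + Sum_any (quad_term v s f m)"
proof -
  let ?G = "mixed_term v s f m" and ?H = "quad_term v s f m"
  have fG: "finite {k. ?G k \<noteq> 0}" by (rule finite_subset[OF mixed_term_supp[OF v B]]) simp
  have fH: "finite {k. ?H k \<noteq> 0}" by (rule finite_subset[OF quad_term_supp]) simp
  have f1: "finite {i. ?G (i - s) \<noteq> 0}"
    using finite_vimageI[OF fG, of "\<lambda>i. i - s"] by (simp add: vimage_def inj_def)
  have f2: "finite {i. ?G (- i) \<noteq> 0}"
    using finite_vimageI[OF fG, of "uminus"] by (simp add: vimage_def inj_def)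
  have f12: "finite {i. ?G (i - s) + ?G (- i) \<noteq> 0}"
    by (rule finite_subset[OF _ finite_UnI[OF f1 f2]]) (simp add: subset_iff)
  have b1: "bij (\<lambda>i::int. i - s)"
    by (rule o_bij[where g="\<lambda>i. i + s"]) (auto simp: o_def)
  have b2: "bij (uminus :: int \<Rightarrow> int)"
    by (rule o_bij[where g="uminus"]) (auto simp: o_def)
  have r1: "Sum_any (\<lambda>i. ?G (i - s)) = Sum_any ?G"
    by (rule Sum_any.reindex_cong[OF b1, symmetric]) (simp add: o_def)
  have r2: "Sum_any (\<lambda>i. ?G (- i)) = Sum_any ?G"
    by (rule Sum_any.reindex_cong[OF b2, symmetric]) (simp add: o_def)
  have "Sum_any (\<lambda>i. nop v i (s - i) f m) = Sum_any (\<lambda>i. (?G (i - s) + ?G (- i)) + ?H i)"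
    by (rule Sum_any.cong) (rule nop_split[OF s])
  also have "\<dots> = Sum_any (\<lambda>i. ?G (i - s) + ?G (- i)) + Sum_any ?H"
    by (rule Sum_any.distrib[OF f12 fH])
  also have "Sum_any (\<lambda>i. ?G (i - s) + ?G (- i)) = Sum_any (\<lambda>i. ?G (i - s)) + Sum_any (\<lambda>i. ?G (- i))"
    by (rule Sum_any.distrib[OF f1 f2])
  finally show ?thesis unfolding r1 r2 Sum_any_mixed_term[OF v B] by (simp only: mult_2)
qed

lemma mixed_sum_pos: "(\<Sum>k<B. mixed_term v (int s) f m (int k)) = 2 * euler_op v s B f m"
  unfolding euler_op_def sum_distrib_left
proof (rule sum.cong)
  fix k assume "k \<in> {..<B}"
  show "mixed_term v (int s) f m (int k) = 2 * (oddw k * mulv (v k) (dv (v (k + s)) f) m)"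
  proof (cases "odd k")
    case True
    then have "0 < k" by (cases k) auto
    then show ?thesis using True by (simp add: mixed_term_def oddw_def nat_add_distrib)
  qed (simp add: mixed_term_def oddw_def)
qed simp

lemma quad_sum_pos: "Sum_any (quad_term v (int s) f m) = 4 * quad_op v s f m"
proof -
  have "Sum_any (quad_term v (int s) f m) = sum (quad_term v (int s) f m) (int ` {..<s})"
  proof (rule Sum_any.expand_superset)
    show "{a. quad_term v (int s) f m a \<noteq> 0} \<subseteq> int ` {..<s}"
    proof
      fix i assume "i \<in> {a. quad_term v (int s) f m a \<noteq> 0}"
      then have "0 < i" "i < int s" by (auto simp: quad_term_def split: if_splits)
      then show "i \<in> int ` {..<s}" by (intro image_eqI[of _ _ "nat i"]) auto
    qed
  qed simp
  also have "\<dots> = (\<Sum>i<s. quad_term v (int s) f m (int i))"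
    by (subst sum.reindex) auto
  also have "\<dots> = 4 * quad_op v s f m"
    unfolding quad_op_def sum_distrib_left
  proof (rule sum.cong)
    fix i assume i: "i \<in> {..<s}"
    show "quad_term v (int s) f m (int i) = 4 * (oddi i * dv (v i) (dv (v (s - i)) f) m)"
    proof (cases "odd i")
      case True
      then have "0 < i" by (cases i) auto
      moreover have "nat (int s - int i) = s - i" using i by auto
      ultimately show ?thesis using True i by (simp add: quad_term_def oddi_def)
    qed (simp add: quad_term_def oddi_def)
  qed simp
  finally show ?thesis .
qed

lemma Vop_normal_form:
  assumes n: "2 \<le> n" and j: "1 \<le> j" and B: "supp_below B m"
  shows "Vop n (int j) f m = vir_op Tv (2 * n - 2) j B f m + vir_op Th 2 j B f m"
proof -
  have vT: "is_family Tv" and vH: "is_family Th" by (simp_all add: is_family_def)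
  have sT: "(2 * int n - 2) * int j = int ((2 * n - 2) * j)" using n by (simp add: of_nat_diff)
  have sH: "2 * int j = int (2 * j)" by simp
  have eT: "even (int ((2 * n - 2) * j))" using n by (simp add: even_diff_nat)
  have eH: "even (int (2 * j))" by simp
  have WT: "Sum_any (\<lambda>i. nop Tv i ((2 * int n - 2) * int j - i) f m)
      = 4 * euler_op Tv ((2 * n - 2) * j) B f m + 4 * quad_op Tv ((2 * n - 2) * j) f m"
    unfolding sT Sum_any_nop[OF vT B eT] mixed_sum_pos quad_sum_pos by simp
  have WH: "Sum_any (\<lambda>i. nop Th i (2 * int j - i) f m)
      = 4 * euler_op Th (2 * j) B f m + 4 * quad_op Th (2 * j) f m"
    unfolding sH Sum_any_nop[OF vH B eH] mixed_sum_pos quad_sum_pos by simp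
  have r: "real (2 * n - 2) = 2 * real n - 2" using n by (simp add: of_nat_diff)
  have n1: "2 * real n - 2 \<noteq> 0" using n by simp
  have c: "1 / (8 * real n - 8) * (4 * a + 4 * b) = 1 / (2 * real n - 2) * b + 1 / (2 * real n - 2) * a"
    for a b :: real
  proof -
    have g: "1 / (4 * x) * (4 * a + 4 * b) = 1 / x * b + 1 / x * a" if "x \<noteq> 0" for x :: real
      using that by (simp add: field_simps)
    have "8 * real n - 8 = 4 * (2 * real n - 2)" by simp
    then show ?thesis using g[OF n1] by simp
  qed
  show ?thesis
    unfolding Vop_def Sum_any_const_mult WT WH vir_op_def r c using j by simp
qed

lemma Vop0_normal_form:
  assumes n: "2 \<le> n" and B: "supp_below B m"
  shows "Vop n 0 f m = 1 / real (2*n-2) * euler_op Tv 0 B f m + 1/2 * euler_op Th 0 B f m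
      + real n / 24 * (1 + 1 / (2 * real n - 2)) * f m"
proof -
  have vT: "is_family Tv" and vH: "is_family Th" by (simp_all add: is_family_def)
  have z: "(2 * int n - 2) * 0 = int 0" "2 * (0::int) = int 0" by simp_all
  have q0: "quad_op v 0 f m = 0" for v by (simp add: quad_op_def)
  have e0: "even (int 0)" by simp
  have WT: "Sum_any (\<lambda>i. nop Tv i ((2 * int n - 2) * 0 - i) f m) = 4 * euler_op Tv 0 B f m"
    unfolding z Sum_any_nop[OF vT B e0] mixed_sum_pos quad_sum_pos q0 by simp
  have WH: "Sum_any (\<lambda>i. nop Th i (2 * 0 - i) f m) = 4 * euler_op Th 0 B f m"
    unfolding z Sum_any_nop[OF vH B e0] mixed_sum_pos quad_sum_pos q0 by simp
  have r: "real (2 * n - 2) = 2 * real n - 2" using n by (simp add: of_nat_diff)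
  have n1: "2 * real n - 2 \<noteq> 0" using n by simp
  have c: "1 / (8 * real n - 8) * (4 * a) = 1 / (2 * real n - 2) * a" for a :: real
  proof -
    have g: "1 / (4 * x) * (4 * a) = 1 / x * a" if "x \<noteq> 0" for x :: real
      using that by simp
    have "8 * real n - 8 = 4 * (2 * real n - 2)" by simp
    then show ?thesis using g[OF n1] by simp
  qed
  show ?thesis unfolding Vop_def Sum_any_const_mult WT WH r c by simp
qed

text \<open>For negative index \<open>-M\<close> the two kinds of terms of \<open>V\<close> are a lowering Euler operator
  \<open>\<Sum> k t_k \<partial>_{k-M}\<close> and a multiplication operator \<open>\<Sum> k (M-k) t_k t_{M-k}\<close>.\<close>

definition euler_down_op :: "(nat \<Rightarrow> dvar) \<Rightarrow> nat \<Rightarrow> nat \<Rightarrow> op" where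
  "euler_down_op v s B f m = (\<Sum>k<B. if odd k \<and> s < k then real k * mulv (v k) (dv (v (k - s)) f) m else 0)"

definition quad_mul_op :: "(nat \<Rightarrow> dvar) \<Rightarrow> nat \<Rightarrow> op" where
  "quad_mul_op v s f m = (\<Sum>k<s. if odd k then real k * real (s - k) * mulv (v k) (mulv (v (s - k)) f) m else 0)"

lemma mixed_sum_neg: "(\<Sum>k<B. mixed_term v (- int M) f m (int k)) = 2 * euler_down_op v M B f m"
  unfolding euler_down_op_def sum_distrib_left
proof (rule sum.cong[OF refl])
  fix k
  show "mixed_term v (- int M) f m (int k) = 2 * (if odd k \<and> M < k then real k * mulv (v k) (dv (v (k - M)) f) m else 0)"
  proof (cases "odd k \<and> M < k")
    case True
    then have "nat (int k + - int M) = k - M" "0 < k" by auto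
    then show ?thesis using True by (simp add: mixed_term_def)
  next
    case False
    then show ?thesis by (auto simp: mixed_term_def)
  qed
qed

lemma quad_sum_neg: "Sum_any (quad_term v (- int M) f m) = quad_mul_op v M f m"
proof -
  have "Sum_any (quad_term v (- int M) f m) = sum (quad_term v (- int M) f m) ((\<lambda>k. - int k) ` {..<M})"
  proof (rule Sum_any.expand_superset)
    show "{a. quad_term v (- int M) f m a \<noteq> 0} \<subseteq> (\<lambda>k. - int k) ` {..<M}"
    proof
      fix i assume "i \<in> {a. quad_term v (- int M) f m a \<noteq> 0}"
      then have "- int M < i" "i < 0" by (auto simp: quad_term_def split: if_splits)
      then show "i \<in> (\<lambda>k. - int k) ` {..<M}" by (intro image_eqI[of _ _ "nat (- i)"]) auto
    qed
  qed simp
  also have "\<dots> = (\<Sum>k<M. quad_term v (- int M) f m (- int k))"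
    by (subst sum.reindex) (auto simp: inj_on_def)
  also have "\<dots> = (\<Sum>k<M. if odd k then real k * real (M - k) * mulv (v k) (mulv (v (M - k)) f) m else 0)"
  proof (rule sum.cong[OF refl])
    fix k assume k: "k \<in> {..<M}"
    show "quad_term v (- int M) f m (- int k) = (if odd k then real k * real (M - k) * mulv (v k) (mulv (v (M - k)) f) m else 0)"
    proof (cases "odd k")
      case True
      then have "0 < k" by (cases k) auto
      moreover have "nat (- int k - - int M) = M - k" "real_of_int (- int k - - int M) = real (M - k)"
        using k by (auto simp: of_nat_diff)
      ultimately show ?thesis using True k by (simp add: quad_term_def)
    next
      case False
      then show ?thesis by (auto simp: quad_term_def)
    qed
  qed
  finally show ?thesis unfolding quad_mul_op_def .
qed

lemma Vop_m1_normal_form: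
  assumes n: "2 \<le> n" and B: "supp_below B m"
  shows "Vop n (-1) f m
    = 1 / real (2*n-2) * euler_down_op Tv (2*n-2) B f m + 1 / (8 * real n - 8) * quad_mul_op Tv (2*n-2) f m
    + 1 / 2 * euler_down_op Th 2 B f m + 1 / 8 * quad_mul_op Th 2 f m"
proof -
  define N where "N = 2 * n - 2"
  have vT: "is_family Tv" and vH: "is_family Th" by (simp_all add: is_family_def)
  have z: "(2 * int n - 2) * - 1 = - int N" "2 * (- 1 :: int) = - int 2"
    using n unfolding N_def by (simp_all add: of_nat_diff)
  have eT: "even (- int N)" unfolding N_def using n by (simp add: even_diff_nat)
  have eH: "even (- int 2)" by simp
  have r: "real N = 2 * real n - 2" using n unfolding N_def by (simp add: of_nat_diff)
  have c: "4 * a / (8 * real n - 8) = a / (2 * real n - 2)" for a :: real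
    using n by (simp add: field_simps)
  show ?thesis
    unfolding Vop_def Sum_any_const_mult z Sum_any_nop[OF vT B eT] Sum_any_nop[OF vH B eH]
      mixed_sum_neg quad_sum_neg N_def[symmetric] r
    by (simp add: distrib_left c)
qed

text \<open>Composing two operators \<open>V_j\<close>, \<open>V_i\<close> at a monomial \<open>m\<close>: the inner operator only needs to be
  known on monomials supported below a bound \<open>C\<close> depending on \<open>m\<close> and \<open>j\<close>, where it is in normal form.\<close>

lemma Vop_compose_normal_form:
  fixes f :: fps
  assumes n: "2 \<le> n" and i: "1 \<le> i" and j: "1 \<le> j" and B: "supp_below B m"
    and C: "B + (2*n-2) * j + 2 * j < C"
  defines "g \<equiv> \<lambda>m'. vir_op Tv (2*n-2) i C f m' + vir_op Th 2 i C f m'"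
  shows "Vop n (int j) (Vop n (int i) f) m = vir_op Tv (2*n-2) j C g m + vir_op Th 2 j C g m"
proof -
  have vT: "is_family Tv" and vH: "is_family Th" by (simp_all add: is_family_def)
  have BC: "B \<le> C" using C by simp
  have inner: "agree_on_supp C (Vop n (int i) f) g"
    unfolding agree_on_supp_def g_def using Vop_normal_form[OF n i] by simp
  have "vir_op Tv (2*n-2) j B (Vop n (int i) f) m = vir_op Tv (2*n-2) j B g m"
    by (rule vir_agree[OF vT B _ _ inner]) (use C in auto)
  moreover have "vir_op Th 2 j B (Vop n (int i) f) m = vir_op Th 2 j B g m"
    by (rule vir_agree[OF vH B _ _ inner]) (use C in auto)
  ultimately show ?thesis
    unfolding Vop_normal_form[OF n j B] vir_bound_irrelevant[OF vT B BC] vir_bound_irrelevant[OF vH B BC]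
    by simp
qed

text \<open>The Virasoro relation for the operators \<open>V_j\<close> themselves, used in the induction for \<open>L_j\<close>, \<open>j \<ge> 3\<close>:
  each family satisfies it separately and the two families commute.\<close>

lemma Vop_virasoro_comm:
  assumes n: "2 \<le> n" and j: "2 \<le> j"
  shows "comm (Vop n 1) (Vop n (int j)) f m = (1 - real j) * Vop n (int (j + 1)) f m"
proof -
  obtain B where B: "supp_below B m" using supp_below_exists by blast
  define N where "N = 2 * n - 2"
  have N: "even N" "0 < N" using n unfolding N_def by auto
  define C where "C = B + N * (j + 1) + 2 * (j + 1) + 1"
  have vT: "is_family Tv" and vH: "is_family Th" by (simp_all add: is_family_def)
  have distinct: "\<And>k l. Tv k \<noteq> Th l" "\<And>k l. Th k \<noteq> Tv l" by auto
  have V1Vj: "Vop n 1 (Vop n (int j) f) m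
      = vir_op Tv N 1 C (\<lambda>m'. vir_op Tv N j C f m' + vir_op Th 2 j C f m') m
      + vir_op Th 2 1 C (\<lambda>m'. vir_op Tv N j C f m' + vir_op Th 2 j C f m') m"
    using Vop_compose_normal_form[OF n _ order.refl B, of j C f] j unfolding N_def C_def by simp
  have VjV1: "Vop n (int j) (Vop n 1 f) m
      = vir_op Tv N j C (\<lambda>m'. vir_op Tv N 1 C f m' + vir_op Th 2 1 C f m') m
      + vir_op Th 2 j C (\<lambda>m'. vir_op Tv N 1 C f m' + vir_op Th 2 1 C f m') m"
    using Vop_compose_normal_form[OF n order.refl _ B, of j C f] j unfolding N_def C_def
    by (simp add: algebra_simps)
  have comm_t: "vir_op Tv N 1 C (vir_op Tv N j C f) m - vir_op Tv N j C (vir_op Tv N 1 C f) m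
      = (1 - real j) * vir_op Tv N (j + 1) B f m"
    by (rule vir_comm_same_family[OF vT N _ B]) (use j in \<open>auto simp: C_def\<close>)
  have comm_that: "vir_op Th 2 1 C (vir_op Th 2 j C f) m - vir_op Th 2 j C (vir_op Th 2 1 C f) m
      = (1 - real j) * vir_op Th 2 (j + 1) B f m"
    by (rule vir_comm_same_family[OF vH _ _ _ B]) (use j in \<open>auto simp: C_def\<close>)
  have cross1: "vir_op Tv N 1 C (vir_op Th 2 j C f) m = vir_op Th 2 j C (vir_op Tv N 1 C f) m"
    by (rule vir_comm_distinct_families) (rule distinct)
  have cross2: "vir_op Th 2 1 C (vir_op Tv N j C f) m = vir_op Tv N j C (vir_op Th 2 1 C f) m"
    by (rule vir_comm_distinct_families) (rule distinct)
  have Vj1: "Vop n (int (j + 1)) f m = vir_op Tv N (j + 1) B f m + vir_op Th 2 (j + 1) B f m"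
    using Vop_normal_form[OF n _ B, of "j + 1" f] unfolding N_def by simp
  show ?thesis
    unfolding comm_def V1Vj VjV1 vir_add Vj1
    using comm_t comm_that cross1 cross2 by (simp add: algebra_simps)
qed

section \<open>The rescaled times\<close>

definition kappa :: "nat \<Rightarrow> nat \<Rightarrow> real" where "kappa n a = 1/2 + mu n a"

lemma Gamma_plus1_pos: "(z::real) > 0 \<Longrightarrow> Gamma (z + 1) = z * Gamma z"
  by (rule Gamma_plus1) (auto dest: nonpos_Ints_nonpos)

lemma kappa_lt: "2 \<le> n \<Longrightarrow> a < n \<Longrightarrow> kappa n a = (2 * real a - 1) / (2 * real n - 2)"
proof -
  assume n: "2 \<le> n" and a: "a < n"
  then have "2 * real n - 2 \<noteq> 0" by simp
  then show ?thesis using a by (simp add: kappa_def mu_def field_simps)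
qed

lemma kappa_n: "kappa n n = 1/2" by (simp add: kappa_def mu_def)

lemma kappa_pos: "2 \<le> n \<Longrightarrow> a \<in> {1..n} \<Longrightarrow> kappa n a > 0"
  by (cases "a = n") (auto simp: kappa_n kappa_lt)

lemma Tc_lt: "2 \<le> n \<Longrightarrow> a < n \<Longrightarrow> Tc n a p = (2 * real n - 2) * Gamma (real p + 1 + kappa n a) / Gamma (kappa n a)"
  by (simp add: Tc_def kappa_lt)

lemma Tc_n: "Tc n n p = 2 * Gamma (real p + 1 + kappa n n) / Gamma (1/2)"
  by (simp add: Tc_def kappa_n add.assoc)

lemma Tc_pos: "2 \<le> n \<Longrightarrow> a \<in> {1..n} \<Longrightarrow> Tc n a p > 0"
proof -
  assume n: "2 \<le> n" and a: "a \<in> {1..n}"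
  have c: "kappa n a > 0" using kappa_pos[OF n a] .
  show ?thesis
  proof (cases "a = n")
    case True then show ?thesis using c by (auto simp: Tc_n intro!: divide_pos_pos mult_pos_pos)
  next
    case False then have "a < n" using a by auto
    then show ?thesis using c n by (auto simp: Tc_lt intro!: divide_pos_pos mult_pos_pos)
  qed
qed

lemma Tc_Suc: "2 \<le> n \<Longrightarrow> a \<in> {1..n} \<Longrightarrow> Tc n a (Suc p) = (real p + 1 + kappa n a) * Tc n a p"
proof -
  assume n: "2 \<le> n" and a: "a \<in> {1..n}"
  have c: "kappa n a > 0" using kappa_pos[OF n a] .
  have g: "Gamma (real (Suc p) + 1 + kappa n a) = (real p + 1 + kappa n a) * Gamma (real p + 1 + kappa n a)"
    using Gamma_plus1_pos[of "real p + 1 + kappa n a"] c by (simp add: algebra_simps)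
  show ?thesis
  proof (cases "a = n")
    case True then show ?thesis using g by (simp only: Tc_n) simp
  next
    case False then have "a < n" using a by auto
    then show ?thesis using g n by (simp only: Tc_lt) simp
  qed
qed

lemma Tc0_lt: "2 \<le> n \<Longrightarrow> 1 \<le> a \<Longrightarrow> a < n \<Longrightarrow> Tc n a 0 = 2 * real a - 1"
proof -
  assume n: "2 \<le> n" and a: "1 \<le> a" "a < n"
  have c: "kappa n a > 0" using kappa_pos[OF n] a by auto
  have "Gamma (kappa n a + 1) = kappa n a * Gamma (kappa n a)" using Gamma_plus1_pos c by blast
  then have "Tc n a 0 = (2 * real n - 2) * kappa n a"
  proof -
    have gz: "Gamma (kappa n a) \<noteq> 0" using Gamma_real_pos[OF c] by linarith
    show ?thesis using c n a gz \<open>Gamma (kappa n a + 1) = kappa n a * Gamma (kappa n a)\<close> by (simp add: Tc_lt add.commute)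
  qed
  also have "\<dots> = 2 * real a - 1" using n a by (simp add: kappa_lt)
  finally show ?thesis .
qed

lemma Tc0_n: "Tc n n 0 = 1"
proof -
  have "Gamma (1/2 + 1 :: real) = 1/2 * Gamma (1/2)" using Gamma_plus1_pos[of "1/2"] by simp
  moreover have "Gamma (1/2 :: real) > 0" by simp
  ultimately show ?thesis by (simp add: Tc_n kappa_n add.commute less_imp_neq[symmetric])
qed

lemma mT_dT: "mT n a p (dT n a q f) m = Tc n a p / Tc n a q * mulv (Tvar n a p) (dv (Tvar n a q) f) m"
proof -
  have e: "dT n a q f = (\<lambda>m. (1 / Tc n a q) * dv (Tvar n a q) f m)" by (rule ext) (simp add: dT_def)
  show ?thesis unfolding mT_def e mulv_cm by simp
qed

lemma dT_dT: "dT n a p (dT n b q f) m = dv (Tvar n a p) (dv (Tvar n b q) f) m / (Tc n a p * Tc n b q)"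
proof -
  have e: "dT n b q f = (\<lambda>m. (1 / Tc n b q) * dv (Tvar n b q) f m)" by (rule ext) (simp add: dT_def)
  show ?thesis unfolding dT_def[of n a p] e dv_cm by simp
qed

lemma mT_mT: "mT n a p (mT n b q f) m = Tc n a p * Tc n b q * mulv (Tvar n a p) (mulv (Tvar n b q) f) m"
proof -
  have e: "mT n b q f = (\<lambda>m. Tc n b q * mulv (Tvar n b q) f m)" by (rule ext) (simp add: mT_def)
  show ?thesis unfolding mT_def[of n a p] e mulv_cm by simp
qed

text \<open>The rescaled times satisfy \<open>T^{a,p+d} = (p + \<kappa> + 1)_d T^{a,p}\<close> (rising factorial),
  so the weights of the raising operators \<open>L_0, L_1, L_2\<close> exactly cancel the rescaling:
  every term becomes \<open>(p + \<kappa>) t \<partial>\<close> in the original times.\<close>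

lemma Tc_shift:
  assumes "2 \<le> n" "a \<in> {1..n}"
  shows "Tc n a (p + d) = pochhammer (real p + kappa n a + 1) d * Tc n a p"
proof (induction d)
  case (Suc d)
  then show ?case using Tc_Suc[OF assms, of "p + d"] by (simp add: pochhammer_Suc algebra_simps)
qed simp

lemma raising_term:
  assumes "2 \<le> n" "a \<in> {1..n}"
  shows "pochhammer (real p + kappa n a) (Suc d) * mT n a p (dT n a (p + d) f) m
       = (real p + kappa n a) * mulv (Tvar n a p) (dv (Tvar n a (p + d)) f) m"
proof -
  have "pochhammer (real p + kappa n a + 1) d > 0"
    by (rule pochhammer_pos) (use kappa_pos[OF assms] in simp)
  moreover have "Tc n a p > 0" by (rule Tc_pos[OF assms])
  ultimately show ?thesis
    unfolding mT_dT Tc_shift[OF assms] pochhammer_rec by (simp add: field_simps)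
qed

lemma lowering_term:
  assumes "2 \<le> n" "a \<in> {1..n}" "1 \<le> p"
  shows "mT n a p (dT n a (p - 1) f) m = (real p + kappa n a) * mulv (Tvar n a p) (dv (Tvar n a (p - 1)) f) m"
proof -
  have "Tc n a p = (real p + kappa n a) * Tc n a (p - 1)"
    using Tc_Suc[OF assms(1,2), of "p - 1"] assms(3) by (simp add: of_nat_diff)
  then show ?thesis using Tc_pos[OF assms(1,2), of "p - 1"] unfolding mT_dT by simp
qed

text \<open>The odd numbers are enumerated by \<open>2p + 1\<close>, and by \<open>(2n-2)p + 2a - 1\<close> with \<open>1 \<le> a \<le> n - 1\<close>: this
  is how the pairs \<open>(a, p)\<close> label the times \<open>t_k\<close>.\<close>

lemma sum_odd_below_double: fixes B :: nat and h :: "nat \<Rightarrow> real" shows "(\<Sum>k<2*B. if odd k then h k else 0) = (\<Sum>p<B. h (2*p+1))"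
proof (induction B)
  case (Suc B)
  have e: "2 * Suc B = Suc (Suc (2 * B))" by simp
  show ?case unfolding e sum.lessThan_Suc Suc.IH by simp
qed simp

lemma sum_shift_1: fixes q :: nat and g :: "nat \<Rightarrow> real" shows "(\<Sum>t<q. g (Suc t)) = (\<Sum>a\<in>{1..q}. g a)"
proof -
  have "{1..q} = Suc ` {..<q}" by (auto simp: image_iff) (metis Suc_pred lessThan_iff not_le not_less_eq_eq Suc_le_eq)
  then show ?thesis by (simp add: sum.reindex)
qed

lemma sum_odd_blocks:
  fixes N q B :: nat and h :: "nat \<Rightarrow> real"
  assumes N: "N = 2 * q"
  shows "(\<Sum>k<N*B. if odd k then h k else 0) = (\<Sum>a\<in>{1..q}. \<Sum>p<B. h (N*p + 2*a - 1))"
proof -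
  let ?g = "\<lambda>k. if odd k then h k else 0"
  have "(\<Sum>k<N*B. ?g k) = (\<Sum>p<B. sum ?g {p*N..<p*N+N})"
    using sum.nat_group[of ?g N B] by (simp add: mult.commute)
  also have "\<dots> = (\<Sum>p<B. \<Sum>a\<in>{1..q}. h (N*p + 2*a - 1))"
  proof (rule sum.cong)
    fix p
    have "sum ?g {p*N..<p*N+N} = sum ?g {0 + p*N..<N + p*N}" by (simp add: add.commute)
    also have "\<dots> = (\<Sum>r\<in>{0..<N}. ?g (r + p*N))" by (rule sum.shift_bounds_nat_ivl)
    also have "\<dots> = (\<Sum>r<2*q. if odd r then h (N*p + r) else 0)"
      using N by (intro sum.cong) (auto simp: atLeast0LessThan algebra_simps)
    also have "\<dots> = (\<Sum>t<q. h (N*p + (2*t+1)))" by (rule sum_odd_below_double)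
    also have "\<dots> = (\<Sum>t<q. h (N*p + 2 * Suc t - 1))" by simp
    also have "\<dots> = (\<Sum>a\<in>{1..q}. h (N*p + 2*a - 1))" by (rule sum_shift_1)
    finally show "sum ?g {p*N..<p*N+N} = (\<Sum>a\<in>{1..q}. h (N*p + 2*a - 1))" .
  qed simp
  also have "\<dots> = (\<Sum>a\<in>{1..q}. \<Sum>p<B. h (N*p + 2*a - 1))" by (rule sum.swap)
  finally show ?thesis .
qed

lemma Tvar_supp_bound:
  assumes n: "2 \<le> n" and a: "1 \<le> a" and B: "supp_below B m" and l: "Poly_Mapping.lookup m (Tvar n a p) \<noteq> 0"
  shows "p < B"
proof (rule ccontr)
  assume "\<not> p < B"
  then have pB: "B \<le> p" by simp
  show False
  proof (cases "a = n")
    case True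
    then show ?thesis using l B pB unfolding Tvar_def supp_below_def by auto
  next
    case False
    have "1 \<le> 2 * n - 2" using n by simp
    then have "p \<le> (2 * n - 2) * p" using mult_le_mono1[of 1 "2 * n - 2" p] by simp
    then have "p \<le> (2 * n - 2) * p + 2 * a - 1" using a by linarith
    then show ?thesis using l B pB False unfolding Tvar_def supp_below_def by auto
  qed
qed

lemma Sum_any_Tvar:
  assumes n: "2 \<le> n" and B: "supp_below B m"
  shows "Sum_any (\<lambda>(a,p). if a \<in> {1..n} \<and> P a p then c a p * mulv (Tvar n a p) (g a p) m else 0)
    = (\<Sum>a\<in>{1..n}. \<Sum>p<B. if P a p then c a p * mulv (Tvar n a p) (g a p) m else 0)"
proof -
  let ?F = "\<lambda>(a,p). if a \<in> {1..n} \<and> P a p then c a p * mulv (Tvar n a p) (g a p) m else 0"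
  have "Sum_any ?F = sum ?F ({1..n} \<times> {..<B})"
  proof (rule Sum_any.expand_superset)
    show "{x. ?F x \<noteq> 0} \<subseteq> {1..n} \<times> {..<B}"
    proof
      fix x assume "x \<in> {x. ?F x \<noteq> 0}"
      then obtain a p where x: "x = (a,p)" and a: "a \<in> {1..n}" and
        nz: "mulv (Tvar n a p) (g a p) m \<noteq> 0"
        by (cases x) (auto split: if_splits)
      have "Poly_Mapping.lookup m (Tvar n a p) \<noteq> 0" using nz mulv_outside_supp by metis
      then have "p < B" using a by (intro Tvar_supp_bound[OF n _ B]) auto
      then show "x \<in> {1..n} \<times> {..<B}" using x a by simp
    qed
  qed simp
  also have "\<dots> = (\<Sum>a\<in>{1..n}. \<Sum>p<B. ?F (a,p))"
    by (rule sum.cartesian_product[of "\<lambda>a p. ?F (a,p)", unfolded case_prod_eta, symmetric])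
  also have "\<dots> = (\<Sum>a\<in>{1..n}. \<Sum>p<B. if P a p then c a p * mulv (Tvar n a p) (g a p) m else 0)"
  proof (rule sum.cong[OF refl])
    fix a assume "a \<in> {1..n}"
    then show "(\<Sum>p<B. ?F (a,p)) = (\<Sum>p<B. if P a p then c a p * mulv (Tvar n a p) (g a p) m else 0)"
      by simp
  qed
  finally show ?thesis .
qed

lemma sum_split_last: fixes n :: nat shows "1 \<le> n \<Longrightarrow> (\<Sum>a\<in>{1..n}. F a) = (\<Sum>a\<in>{1..n-1}. F a) + (F n :: real)"
proof -
  assume "1 \<le> n"
  then obtain n' where "n = Suc n'" by (cases n) auto
  then show ?thesis by (simp add: sum.cl_ivl_Suc)
qed

lemma euler_odd: "euler_op v s B f m = (\<Sum>k<B. if odd k then real k * mulv (v k) (dv (v (k + s)) f) m else 0)"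
  unfolding euler_op_def by (intro sum.cong) (auto simp: oddw_def)

text \<open>The weighted sum \<open>\<Sum>_{a,p} (p + \<kappa>) t_{(a,p)} \<partial>_{(a,p+d)}\<close> is the Euler part of \<open>V_d\<close>: for
  \<open>a < n\<close> the weight \<open>p + \<kappa>\<close> is \<open>k/(2n-2)\<close> with \<open>k = (2n-2)p + 2a - 1\<close>, and for \<open>a = n\<close> it is
  \<open>k/2\<close> with \<open>k = 2p + 1\<close>.\<close>

lemma raising_sum_Tv:
  assumes n: "2 \<le> n" and B: "supp_below B m"
  shows "(\<Sum>a\<in>{1..n-1}. \<Sum>p<B. (real p + kappa n a) * mulv (Tvar n a p) (dv (Tvar n a (p + d)) f) m)
      = 1 / real (2*n-2) * euler_op Tv ((2*n-2) * d) B f m"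
proof -
  define N where "N = 2 * n - 2"
  have N0: "0 < N" using n unfolding N_def by simp
  have Nr: "real N = 2 * real n - 2" using n unfolding N_def by (simp add: of_nat_diff)
  have vT: "is_family Tv" by (simp add: is_family_def)
  have "euler_op Tv (N * d) B f m = euler_op Tv (N * d) (N * B) f m"
    by (rule euler_bound_irrelevant[OF vT B, symmetric]) (use N0 in simp)
  also have "\<dots> = (\<Sum>a\<in>{1..n-1}. \<Sum>p<B. real (N*p + 2*a - 1)
      * mulv (Tv (N*p + 2*a - 1)) (dv (Tv (N*p + 2*a - 1 + N * d)) f) m)"
    unfolding euler_odd by (rule sum_odd_blocks) (simp add: N_def)
  finally have e: "1 / real N * euler_op Tv (N * d) B f m = (\<Sum>a\<in>{1..n-1}. \<Sum>p<B. real (N*p + 2*a - 1) / real N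
      * mulv (Tv (N*p + 2*a - 1)) (dv (Tv (N*p + 2*a - 1 + N * d)) f) m)"
    by (simp add: sum_distrib_left)
  show ?thesis unfolding N_def[symmetric] e
  proof (intro sum.cong refl)
    fix a p assume a: "a \<in> {1..n-1}"
    then have an: "a < n" "1 \<le> a" using n by auto
    have c: "real p + kappa n a = real (N*p + 2*a - 1) / real N"
      using an N0 n by (simp add: kappa_lt[OF n] Nr of_nat_diff field_simps)
    have i: "N * (p + d) + 2 * a - 1 = N*p + 2*a - 1 + N * d" using an by (simp add: algebra_simps)
    show "(real p + kappa n a) * mulv (Tvar n a p) (dv (Tvar n a (p + d)) f) m
        = real (N*p + 2*a - 1) / real N * mulv (Tv (N*p + 2*a - 1)) (dv (Tv (N*p + 2*a - 1 + N * d)) f) m"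
      unfolding c using an i by (simp add: Tvar_def N_def)
  qed
qed

lemma raising_sum_Th:
  assumes B: "supp_below B m"
  shows "(\<Sum>p<B. (real p + kappa n n) * mulv (Tvar n n p) (dv (Tvar n n (p + d)) f) m)
      = 1 / 2 * euler_op Th (2 * d) B f m"
proof -
  have vH: "is_family Th" by (simp add: is_family_def)
  have "euler_op Th (2 * d) B f m = euler_op Th (2 * d) (2 * B) f m"
    by (rule euler_bound_irrelevant[OF vH B, symmetric]) simp
  also have "\<dots> = (\<Sum>p<B. real (2*p+1) * mulv (Th (2*p+1)) (dv (Th (2*p+1 + 2*d)) f) m)"
    unfolding euler_odd by (rule sum_odd_below_double)
  finally show ?thesis by (simp add: sum_distrib_left kappa_n Tvar_def algebra_simps)
qed

lemma raising_sum:
  assumes n: "2 \<le> n" and B: "supp_below B m"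
  shows "(\<Sum>a\<in>{1..n}. \<Sum>p<B. (real p + kappa n a) * mulv (Tvar n a p) (dv (Tvar n a (p + d)) f) m)
    = 1 / real (2*n-2) * euler_op Tv ((2*n-2) * d) B f m + 1 / 2 * euler_op Th (2 * d) B f m"
proof -
  have n1: "1 \<le> n" using n by simp
  show ?thesis unfolding sum_split_last[OF n1] raising_sum_Tv[OF n B] raising_sum_Th[OF B] ..
qed

lemma raising_operator:
  assumes n: "2 \<le> n" and B: "supp_below B m"
  shows "Sum_any (\<lambda>(a,p). if a \<in> {1..n}
            then pochhammer (real p + kappa n a) (Suc d) * mT n a p (dT n a (p + d) f) m else 0)
    = 1 / real (2*n-2) * euler_op Tv ((2*n-2) * d) B f m + 1 / 2 * euler_op Th (2 * d) B f m"
proof -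
  have "Sum_any (\<lambda>(a,p). if a \<in> {1..n}
            then pochhammer (real p + kappa n a) (Suc d) * mT n a p (dT n a (p + d) f) m else 0)
      = Sum_any (\<lambda>(a,p). if a \<in> {1..n} \<and> True
            then (real p + kappa n a) * mulv (Tvar n a p) (dv (Tvar n a (p + d)) f) m else 0)"
    by (intro Sum_any.cong) (auto simp: raising_term[OF n])
  also have "\<dots> = (\<Sum>a\<in>{1..n}. \<Sum>p<B. if True
            then (real p + kappa n a) * mulv (Tvar n a p) (dv (Tvar n a (p + d)) f) m else 0)"
    by (rule Sum_any_Tvar[OF n B])
  finally show ?thesis using raising_sum[OF n B, of d f] by simp
qed

lemma eta_pattern_sum:
  fixes F :: "nat \<Rightarrow> nat \<Rightarrow> real"
  assumes n: "2 \<le> n" and e: "\<And>a b. e a b = (if a + b = n then \<alpha> else 0) + (if a = n \<and> b = n then \<beta> else 0)"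
  shows "(\<Sum>a\<in>{1..n}. \<Sum>b\<in>{1..n}. e a b * F a b)
    = \<alpha> * (\<Sum>a\<in>{1..n-1}. F a (n - a)) + \<beta> * F n n"
proof -
  have n1: "1 \<le> n" using n by simp
  have "(\<Sum>a\<in>{1..n}. \<Sum>b\<in>{1..n}. e a b * F a b)
     = (\<Sum>a\<in>{1..n}. \<Sum>b\<in>{1..n}. (if b = n - a \<and> a < n then \<alpha> * F a b else 0)
        + (if b = n \<and> a = n then \<beta> * F a b else 0))"
  proof (intro sum.cong refl)
    fix a b assume "a \<in> {1..n}" "b \<in> {1..n}"
    then show "e a b * F a b = (if b = n - a \<and> a < n then \<alpha> * F a b else 0)
        + (if b = n \<and> a = n then \<beta> * F a b else 0)"
      by (auto simp: e algebra_simps)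
  qed
  also have "\<dots> = (\<Sum>a\<in>{1..n}. (if a < n then \<alpha> * F a (n - a) else 0)
        + (if a = n then \<beta> * F a n else 0))"
  proof (rule sum.cong[OF refl])
    fix a assume a: "a \<in> {1..n}"
    have "(\<Sum>b\<in>{1..n}. (if b = n - a \<and> a < n then \<alpha> * F a b else 0)
        + (if b = n \<and> a = n then \<beta> * F a b else 0))
      = (\<Sum>b\<in>{1..n}. if b = n - a then (if a < n then \<alpha> * F a b else 0) else 0)
        + (\<Sum>b\<in>{1..n}. if b = n then (if a = n then \<beta> * F a b else 0) else 0)"
      by (simp add: sum.distrib[symmetric] if_distrib cong: if_cong) (intro sum.cong; auto)
    also have "\<dots> = (if a < n then \<alpha> * F a (n - a) else 0) + (if a = n then \<beta> * F a n else 0)"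
      using a n1 by (auto simp: sum.delta')
    finally show "(\<Sum>b\<in>{1..n}. (if b = n - a \<and> a < n then \<alpha> * F a b else 0)
        + (if b = n \<and> a = n then \<beta> * F a b else 0))
      = (if a < n then \<alpha> * F a (n - a) else 0) + (if a = n then \<beta> * F a n else 0)" .
  qed
  also have "\<dots> = (\<Sum>a\<in>{1..n}. if a < n then \<alpha> * F a (n - a) else 0) + \<beta> * F n n"
    using n1 by (simp add: sum.distrib sum.delta')
  also have "(\<Sum>a\<in>{1..n}. if a < n then \<alpha> * F a (n - a) else 0)
      = \<alpha> * (\<Sum>a\<in>{1..n-1}. F a (n - a))"
    unfolding sum_split_last[OF n1] sum_distrib_left by (auto intro!: sum.cong)
  finally show ?thesis .
qed

lemma eta_inv_sum:
  fixes F :: "nat \<Rightarrow> nat \<Rightarrow> real"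
  assumes n: "2 \<le> n"
  shows "(\<Sum>a\<in>{1..n}. \<Sum>b\<in>{1..n}. eta_inv n a b * F a b)
    = (4 * real n - 4) * (\<Sum>a\<in>{1..n-1}. F a (n - a)) + 4 * F n n"
  by (rule eta_pattern_sum[OF n]) (simp add: eta_inv_def)

lemma eta_sum:
  fixes F :: "nat \<Rightarrow> nat \<Rightarrow> real"
  assumes n: "2 \<le> n"
  shows "(\<Sum>a\<in>{1..n}. \<Sum>b\<in>{1..n}. eta n a b * F a b)
    = 1 / (4 * real n - 4) * (\<Sum>a\<in>{1..n-1}. F a (n - a)) + 1/4 * F n n"
  by (rule eta_pattern_sum[OF n]) (simp add: eta_def)

lemma quad_odd: "quad_op v s f m = (\<Sum>i<s. if odd i then dv (v i) (dv (v (s - i)) f) m else 0)"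
  unfolding quad_op_def by (intro sum.cong) (auto simp: oddi_def)

lemma quad_Tv_1:
  assumes n: "2 \<le> n"
  shows "quad_op Tv (2*n-2) f m = (\<Sum>a\<in>{1..n-1}. dv (Tv (2*a-1)) (dv (Tv (2*(n-a)-1)) f) m)"
proof -
  have "quad_op Tv (2*n-2) f m = (\<Sum>i<(2*n-2)*1. if odd i then dv (Tv i) (dv (Tv (2*n-2 - i)) f) m else 0)"
    unfolding quad_odd by simp
  also have "\<dots> = (\<Sum>a\<in>{1..n-1}. \<Sum>p<1. dv (Tv ((2*n-2)*p + 2*a-1)) (dv (Tv (2*n-2 - ((2*n-2)*p + 2*a-1))) f) m)"
    by (rule sum_odd_blocks) simp
  also have "\<dots> = (\<Sum>a\<in>{1..n-1}. dv (Tv (2*a-1)) (dv (Tv (2*(n-a)-1)) f) m)"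
  proof (intro sum.cong refl)
    fix a assume "a \<in> {1..n-1}"
    then have "2*n-2 - (2*a-1) = 2*(n-a)-1" by auto
    then show "(\<Sum>p<1. dv (Tv ((2*n-2)*p + 2*a-1)) (dv (Tv (2*n-2 - ((2*n-2)*p + 2*a-1))) f) m)
      = dv (Tv (2*a-1)) (dv (Tv (2*(n-a)-1)) f) m" by simp
  qed
  finally show ?thesis .
qed

lemma quad_Tv_2:
  assumes n: "2 \<le> n"
  shows "quad_op Tv ((2*n-2)*2) f m = 2 * (\<Sum>a\<in>{1..n-1}. dv (Tv ((2*n-2) + 2*a-1)) (dv (Tv (2*(n-a)-1)) f) m)"
proof -
  define N where "N = 2*n-2"
  define h where "h = (\<lambda>k. dv (Tv k) (dv (Tv (N*2 - k)) f) m)"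
  have "quad_op Tv (N*2) f m = (\<Sum>i<N*2. if odd i then h i else 0)"
    unfolding quad_odd h_def ..
  also have "\<dots> = (\<Sum>a\<in>{1..n-1}. \<Sum>p<2. h (N*p + 2*a-1))"
    by (rule sum_odd_blocks) (simp add: N_def)
  also have "\<dots> = (\<Sum>a\<in>{1..n-1}. h (2*a-1)) + (\<Sum>a\<in>{1..n-1}. h (N + 2*a-1))"
    by (simp add: numeral_2_eq_2 sum.distrib)
  also have "(\<Sum>a\<in>{1..n-1}. h (2*a-1)) = (\<Sum>a\<in>{1..n-1}. h (N + 2*a-1))"
  proof (rule sum.reindex_bij_witness[where i="\<lambda>a. n - a" and j="\<lambda>a. n - a"])
    fix a assume a: "a \<in> {1..n-1}"
    then show "n - (n - a) = a" by auto
    show "n - a \<in> {1..n-1}" using a by auto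
    have e: "N * 2 - (N + 2 * (n - a) - 1) = 2 * a - 1" "N * 2 - (2 * a - 1) = N + 2 * (n - a) - 1"
      using a n unfolding N_def by auto
    show "h (N + 2 * (n - a) - 1) = h (2 * a - 1)"
      unfolding h_def e by (rule dv_dv_comm)
  qed auto
  also have "(\<Sum>a\<in>{1..n-1}. h (N + 2*a-1)) = (\<Sum>a\<in>{1..n-1}. dv (Tv ((2*n-2) + 2*a-1)) (dv (Tv (2*(n-a)-1)) f) m)"
  proof (intro sum.cong refl)
    fix a assume a: "a \<in> {1..n-1}"
    have e: "N * 2 - (N + 2 * a - 1) = 2 * (n - a) - 1" using a n unfolding N_def by auto
    show "h (N + 2*a-1) = dv (Tv ((2*n-2) + 2*a-1)) (dv (Tv (2*(n-a)-1)) f) m"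
      by (simp only: h_def e) (simp only: N_def)
  qed
  finally show ?thesis unfolding N_def by simp
qed

section \<open>The operator \<open>L_{-1}\<close>\<close>

text \<open>The lowering part of \<open>L_{-1}\<close>, family by family: \<open>(p + \<kappa>) t_{(2n-2)p+2a-1} \<partial>_{\<dots>}\<close>
  is \<open>k/(2n-2) t_k \<partial>_{k-(2n-2)}\<close> for \<open>k = (2n-2)p + 2a - 1\<close>, and similarly for the hatted times.\<close>

lemma lowering_sum_Tv:
  assumes n: "2 \<le> n" and B: "supp_below B m"
  shows "(\<Sum>a\<in>{1..n-1}. \<Sum>p<B. if 1 \<le> p
            then (real p + kappa n a) * mulv (Tvar n a p) (dv (Tvar n a (p - 1)) f) m else 0)
     = 1 / real (2*n-2) * euler_down_op Tv (2*n-2) B f m"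
proof -
  define N where "N = 2 * n - 2"
  have Nr: "real N = 2 * real n - 2" using n unfolding N_def by (simp add: of_nat_diff)
  have N0: "real N > 0" using n Nr by simp
  have vT: "is_family Tv" by (simp add: is_family_def)
  define h where "h = (\<lambda>k. if N < k then real k / real N * mulv (Tv k) (dv (Tv (k - N)) f) m else 0)"
  have "1 / real N * euler_down_op Tv N B f m
      = (\<Sum>k<B. if odd k then h k else 0)"
    unfolding euler_down_op_def sum_distrib_left h_def by (intro sum.cong refl) auto
  also have "\<dots> = (\<Sum>k<N*B. if odd k then h k else 0)"
    using N0 by (intro sum_lessThan_shrink[symmetric]) (auto simp: h_def mulv_outside_supp supp_below_lookup[OF B vT])
  also have "\<dots> = (\<Sum>a\<in>{1..n-1}. \<Sum>p<B. h (N*p + 2*a - 1))"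
    by (rule sum_odd_blocks) (simp add: N_def)
  also have "\<dots> = (\<Sum>a\<in>{1..n-1}. \<Sum>p<B. if 1 \<le> p then (real p + kappa n a) * mulv (Tvar n a p) (dv (Tvar n a (p - 1)) f) m else 0)"
  proof (intro sum.cong refl)
    fix a p assume a: "a \<in> {1..n-1}"
    then have an: "a < n" "1 \<le> a" using n by auto
    have aN: "2 * a - 1 < N" "1 \<le> 2 * a - 1" using an unfolding N_def by auto
    show "h (N*p + 2*a - 1) = (if 1 \<le> p then (real p + kappa n a) * mulv (Tvar n a p) (dv (Tvar n a (p - 1)) f) m else 0)"
    proof (cases "1 \<le> p")
      case True
      have lt: "N < N*p + 2*a - 1"
      proof -
        have "N \<le> N * p" using True by simp
        then show ?thesis using aN by linarith
      qed
      have i: "N*p + 2*a - 1 - N = N * (p - 1) + 2 * a - 1"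
      proof -
        obtain p' where "p = Suc p'" using True by (cases p) auto
        then show ?thesis using aN by (simp add: algebra_simps)
      qed
      have c: "real p + kappa n a = real (N*p + 2*a - 1) / real N"
        using an N0 n by (simp add: kappa_lt[OF n] Nr of_nat_diff field_simps)
      show ?thesis unfolding h_def c using True lt i an by (simp add: Tvar_def N_def)
    next
      case False
      then have "p = 0" by simp
      then show ?thesis unfolding h_def using aN by simp
    qed
  qed
  finally show ?thesis by (simp add: N_def)
qed

lemma lowering_sum_Th:
  assumes B: "supp_below B m"
  shows "(\<Sum>p<B. if 1 \<le> p
            then (real p + kappa n n) * mulv (Tvar n n p) (dv (Tvar n n (p - 1)) f) m else 0)
     = 1 / 2 * euler_down_op Th 2 B f m"
proof -
  have vH: "is_family Th" by (simp add: is_family_def)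
  define h where "h = (\<lambda>k. if 2 < k then real k / 2 * mulv (Th k) (dv (Th (k - 2)) f) m else 0)"
  have "1 / 2 * euler_down_op Th 2 B f m
      = (\<Sum>k<B. if odd k then h k else 0)"
    unfolding euler_down_op_def sum_distrib_left h_def by (intro sum.cong refl) auto
  also have "\<dots> = (\<Sum>k<2*B. if odd k then h k else 0)"
    by (intro sum_lessThan_shrink[symmetric]) (auto simp: h_def mulv_outside_supp supp_below_lookup[OF B vH])
  also have "\<dots> = (\<Sum>p<B. h (2*p+1))" by (rule sum_odd_below_double)
  also have "\<dots> = (\<Sum>p<B. if 1 \<le> p then (real p + kappa n n) * mulv (Tvar n n p) (dv (Tvar n n (p - 1)) f) m else 0)"
  proof (intro sum.cong refl)
    fix p
    show "h (2*p+1) = (if 1 \<le> p then (real p + kappa n n) * mulv (Tvar n n p) (dv (Tvar n n (p - 1)) f) m else 0)"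
    proof (cases "1 \<le> p")
      case True
      then obtain p' where p: "p = Suc p'" by (cases p) auto
      show ?thesis unfolding h_def p by (simp add: Tvar_def kappa_n field_simps)
    qed (simp add: h_def)
  qed
  finally show ?thesis by simp
qed

lemma Lm1_lowering_part:
  assumes n: "2 \<le> n" and B: "supp_below B m"
  shows "Sum_any (\<lambda>(a,p). if a \<in> {1..n} \<and> p \<ge> 1 then mT n a p (dT n a (p - 1) f) m else 0)
     = 1 / real (2*n-2) * euler_down_op Tv (2*n-2) B f m + 1 / 2 * euler_down_op Th 2 B f m"
proof -
  have "Sum_any (\<lambda>(a,p). if a \<in> {1..n} \<and> p \<ge> 1 then mT n a p (dT n a (p - 1) f) m else 0)
      = Sum_any (\<lambda>(a,p). if a \<in> {1..n} \<and> 1 \<le> p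
          then (real p + kappa n a) * mulv (Tvar n a p) (dv (Tvar n a (p - 1)) f) m else 0)"
  proof (intro Sum_any.cong, clarify)
    fix a p
    show "(if a \<in> {1..n} \<and> p \<ge> 1 then mT n a p (dT n a (p - 1) f) m else 0)
        = (if a \<in> {1..n} \<and> 1 \<le> p
          then (real p + kappa n a) * mulv (Tvar n a p) (dv (Tvar n a (p - 1)) f) m else 0)"
      using lowering_term[OF n, of a p f m] by simp
  qed
  also have "\<dots> = (\<Sum>a\<in>{1..n}. \<Sum>p<B. if 1 \<le> p
          then (real p + kappa n a) * mulv (Tvar n a p) (dv (Tvar n a (p - 1)) f) m else 0)"
    by (rule Sum_any_Tvar[OF n B])
  also have "\<dots> = (\<Sum>a\<in>{1..n-1}. \<Sum>p<B. if 1 \<le> p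
          then (real p + kappa n a) * mulv (Tvar n a p) (dv (Tvar n a (p - 1)) f) m else 0)
      + (\<Sum>p<B. if 1 \<le> p
          then (real p + kappa n n) * mulv (Tvar n n p) (dv (Tvar n n (p - 1)) f) m else 0)"
    by (rule sum_split_last) (use n in simp)
  finally show ?thesis unfolding lowering_sum_Tv[OF n B] lowering_sum_Th[OF B] .
qed

text \<open>The quadratic part of \<open>L_{-1}\<close>: \<open>\<eta>\<close> pairs \<open>T^{a,0} = (2a-1) t_{2a-1}\<close> with
  \<open>T^{n-a,0}\<close>, and \<open>T^{n,0} = \<hat>t_1\<close> with itself.\<close>

lemma Lm1_quadratic_part:
  assumes n: "2 \<le> n"
  shows "(\<Sum>a\<in>{1..n}. \<Sum>b\<in>{1..n}. 1/2 * eta n a b * mT n a 0 (mT n b 0 f) m)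
    = 1 / (8 * real n - 8) * quad_mul_op Tv (2*n-2) f m + 1 / 8 * quad_mul_op Th 2 f m"
proof -
  define N where "N = 2 * n - 2"
  define F where "F = (\<lambda>a b. 1/2 * mT n a 0 (mT n b 0 f) m)"
  have Q0: "(\<Sum>a\<in>{1..n}. \<Sum>b\<in>{1..n}. 1/2 * eta n a b * mT n a 0 (mT n b 0 f) m)
      = (\<Sum>a\<in>{1..n}. \<Sum>b\<in>{1..n}. eta n a b * F a b)"
    unfolding F_def by (intro sum.cong refl) (simp only: mult_ac)
  have Fn: "1/4 * F n n = 1 / 8 * quad_mul_op Th 2 f m"
    unfolding F_def mT_mT Tc0_n quad_mul_op_def by (simp add: Tvar_def lessThan_nat_numeral)
  have Fa: "(\<Sum>a\<in>{1..n-1}. F a (n - a))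
      = 1 / 2 * quad_mul_op Tv N f m"
  proof -
    have "(\<Sum>k<N*1. if odd k then real k * real (N - k) * mulv (Tv k) (mulv (Tv (N - k)) f) m else 0)
      = (\<Sum>a\<in>{1..n-1}. \<Sum>p<1. real (N*p + 2*a - 1) * real (N - (N*p + 2*a - 1)) * mulv (Tv (N*p + 2*a - 1)) (mulv (Tv (N - (N*p + 2*a - 1))) f) m)"
      by (rule sum_odd_blocks) (simp add: N_def)
    also have "\<dots> = (\<Sum>a\<in>{1..n-1}. 2 * F a (n - a))"
    proof (intro sum.cong refl)
      fix a assume a: "a \<in> {1..n-1}"
      then have a1: "1 \<le> a" "a < n" "1 \<le> n - a" "n - a < n" using n by auto
      have e: "N - (2 * a - Suc 0) = 2 * (n - a) - Suc 0" using a1 unfolding N_def by auto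
      have t1: "Tc n a 0 = real (2 * a - 1)" using Tc0_lt[OF n a1(1,2)] a1 by (simp add: of_nat_diff)
      have t2: "Tc n (n-a) 0 = real (2 * (n - a) - 1)" using Tc0_lt[OF n a1(3,4)] a1 by (simp add: of_nat_diff)
      have tv: "Tvar n a 0 = Tv (2*a-1)" "Tvar n (n-a) 0 = Tv (2*(n-a)-1)" using a1 by (auto simp: Tvar_def)
      show "(\<Sum>p<1. real (N*p + 2*a - 1) * real (N - (N*p + 2*a - 1)) * mulv (Tv (N*p + 2*a - 1)) (mulv (Tv (N - (N*p + 2*a - 1))) f) m)
          = 2 * F a (n - a)"
        unfolding F_def mT_mT t1 t2 tv by (simp add: e)
    qed
    finally show ?thesis by (simp add: quad_mul_op_def sum_distrib_left)
  qed
  have g: "1 / (4 * x - 4) * (1/2 * y) = 1 / (8 * x - 8) * y" for x y :: real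
    by (simp add: field_simps)
  show ?thesis unfolding Q0 eta_sum[OF n] Fn Fa g N_def ..
qed

lemma Lm1_eq_V:
  assumes n: "2 \<le> n"
  shows "Lm1 n f m = Vop n (-1) f m"
proof -
  obtain B where B: "supp_below B m" using supp_below_exists by blast
  show ?thesis
    unfolding Lm1_def Lm1_lowering_part[OF n B] Lm1_quadratic_part[OF n] Vop_m1_normal_form[OF n B]
    by simp
qed

section \<open>The operator \<open>L_0\<close>\<close>

lemma sum_nat_real: "(\<Sum>a\<in>{1..q}. real a) = real q * (real q + 1) / 2"
  by (induction q) (auto simp: sum.cl_ivl_Suc field_simps)

lemma sum_nat_sq_real: "(\<Sum>a\<in>{1..q}. real a ^ 2) = real q * (real q + 1) * (2 * real q + 1) / 6"
  by (induction q) (auto simp: sum.cl_ivl_Suc field_simps power2_eq_square)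

lemma sum_centered_sq: "(\<Sum>a\<in>{1..q}. (2 * real a - (real q + 1)) ^ 2) = real q * (real q ^ 2 - 1) / 3"
proof -
  have "(\<Sum>a\<in>{1..q}. (2 * real a - (real q + 1)) ^ 2)
     = (\<Sum>a\<in>{1..q}. 4 * real a ^ 2 - 4 * (real q + 1) * real a + (real q + 1) ^ 2)"
    by (intro sum.cong refl) (simp add: power2_eq_square algebra_simps)
  also have "\<dots> = 4 * (\<Sum>a\<in>{1..q}. real a ^ 2) - 4 * (real q + 1) * (\<Sum>a\<in>{1..q}. real a) + real q * (real q + 1) ^ 2"
    by (simp add: sum.distrib sum_subtractf sum_distrib_left)
  also have "\<dots> = real q * (real q ^ 2 - 1) / 3"
    unfolding sum_nat_real sum_nat_sq_real by (simp add: field_simps power2_eq_square)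
  finally show ?thesis .
qed

lemma L0_constant:
  assumes n: "2 \<le> n"
  shows "1/4 * (\<Sum>a\<in>{1..n}. 1/4 - (mu n a)\<^sup>2) = real n / 24 * (1 + 1 / (2 * real n - 2))"
proof -
  define q where "q = n - 1"
  have nq: "n = q + 1" "1 \<le> q" using n unfolding q_def by auto
  have qr: "real q \<ge> 1" using nq by simp
  have "(\<Sum>a\<in>{1..n}. 1/4 - (mu n a)\<^sup>2) = (\<Sum>a\<in>{1..q}. 1/4 - (mu n a)\<^sup>2) + 1/4"
    using sum_split_last[of n "\<lambda>a. 1/4 - (mu n a)\<^sup>2"] n unfolding q_def by (simp add: mu_def)
  also have "(\<Sum>a\<in>{1..q}. 1/4 - (mu n a)\<^sup>2) = (\<Sum>a\<in>{1..q}. 1/4 - (2 * real a - (real q + 1)) ^ 2 / (4 * real q ^ 2))"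
  proof (intro sum.cong refl)
    fix a assume "a \<in> {1..q}"
    then have "a \<noteq> n" using nq by auto
    then show "1/4 - (mu n a)\<^sup>2 = 1/4 - (2 * real a - (real q + 1)) ^ 2 / (4 * real q ^ 2)"
      using nq qr by (simp add: mu_def power_divide power2_eq_square algebra_simps)
  qed
  also have "\<dots> = real q / 4 - (real q * (real q ^ 2 - 1) / 3) / (4 * real q ^ 2)"
    unfolding sum_subtractf sum_divide_distrib[symmetric] sum_centered_sq by simp
  finally have e: "(\<Sum>a\<in>{1..n}. 1/4 - (mu n a)\<^sup>2) = real q / 4 - (real q * (real q ^ 2 - 1) / 3) / (4 * real q ^ 2) + 1/4" .
  have "2 * real n - 2 = 2 * real q" using nq by simp
  then show ?thesis unfolding e using qr nq by (simp add: field_simps power2_eq_square)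
qed

lemma L0_eq_V:
  assumes n: "2 \<le> n"
  shows "L0 n f m = Vop n 0 f m"
proof -
  obtain B where B: "supp_below B m" using supp_below_exists by blast
  have raising: "Sum_any (\<lambda>(a,p). if a \<in> {1..n} then (real p + 1/2 + mu n a) * mT n a p (dT n a p f) m else 0)
      = 1 / real (2*n-2) * euler_op Tv 0 B f m + 1 / 2 * euler_op Th 0 B f m"
  proof -
    have coeff: "pochhammer (real p + kappa n a) (Suc 0) = real p + 1/2 + mu n a" for p a
      by (simp add: kappa_def)
    show ?thesis using raising_operator[OF n B, of 0 f, unfolded coeff add_0_right] by simp
  qed
  show ?thesis unfolding L0_def raising Vop0_normal_form[OF n B] L0_constant[OF n] by simp
qed

section \<open>The operators \<open>L_1\<close> and \<open>L_2\<close>\<close>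

text \<open>One pair \<open>(a, n - a)\<close> of the quadratic part of \<open>L_1\<close>: the rescaling factors
  \<open>T^{a,0} = (2a - 1) t_{2a-1}\<close> cancel the weights \<open>1/2 + \<mu>\<close>.\<close>

lemma L1_pair_term:
  assumes n: "2 \<le> n" and a: "a \<in> {1..n-1}"
  shows "(4 * real n - 4) * (1/2 * (1/2 + mu n a) * (1/2 + mu n (n-a)) * dT n a 0 (dT n (n-a) 0 f) m)
       = 1 / real (2*n-2) * dv (Tv (2*a-1)) (dv (Tv (2*(n-a)-1)) f) m"
proof -
  define N where "N = 2 * n - 2"
  have Nr: "real N = 2 * real n - 2" using n unfolding N_def by (simp add: of_nat_diff)
  have N0: "real N \<noteq> 0" using n Nr by simp
  have a1: "1 \<le> a" "a < n" "1 \<le> n - a" "n - a < n" using a n by auto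
  have t1: "Tc n a 0 = 2 * real a - 1" using Tc0_lt[OF n a1(1,2)] .
  have t2: "Tc n (n-a) 0 = 2 * real (n-a) - 1" using Tc0_lt[OF n a1(3,4)] .
  have c1: "1/2 + mu n a = (2 * real a - 1) / real N"
    using kappa_lt[OF n a1(2)] Nr by (simp add: kappa_def)
  have c2: "1/2 + mu n (n-a) = (2 * real (n-a) - 1) / real N"
    using kappa_lt[OF n a1(4)] Nr by (simp add: kappa_def)
  have p1: "2 * real a - 1 \<noteq> 0" "2 * real (n-a) - 1 \<noteq> 0" using a1 by auto
  have g: "(2 * N') * (1/2 * (x / N') * (y / N') * (D / (x * y))) = 1 / N' * D"
    if "x \<noteq> 0" "y \<noteq> 0" "N' \<noteq> 0" for x y N' D :: real
    using that by (simp add: field_simps)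
  have e4: "4 * real n - 4 = 2 * real N" using Nr by simp
  have tv: "Tvar n a 0 = Tv (2*a-1)" "Tvar n (n-a) 0 = Tv (2*(n-a)-1)"
    using a1 by (auto simp: Tvar_def)
  show ?thesis unfolding N_def[symmetric] dT_dT t1 t2 c1 c2 e4 tv
    by (rule g) (use p1 N0 in auto)
qed

lemma L1_quadratic_part:
  assumes n: "2 \<le> n"
  shows "(\<Sum>a\<in>{1..n}. \<Sum>b\<in>{1..n}. 1/2 * eta_inv n a b * (1/2 + mu n a) * (1/2 + mu n b)
                   * dT n a 0 (dT n b 0 f) m)
      = 1 / real (2*n-2) * quad_op Tv (2*n-2) f m + 1/2 * quad_op Th 2 f m"
proof -
  define N where "N = 2 * n - 2"
  define F where "F = (\<lambda>a b. 1/2 * (1/2 + mu n a) * (1/2 + mu n b) * dT n a 0 (dT n b 0 f) m)"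
  have Q0: "(\<Sum>a\<in>{1..n}. \<Sum>b\<in>{1..n}. 1/2 * eta_inv n a b * (1/2 + mu n a) * (1/2 + mu n b)
                   * dT n a 0 (dT n b 0 f) m)
      = (\<Sum>a\<in>{1..n}. \<Sum>b\<in>{1..n}. eta_inv n a b * F a b)"
    unfolding F_def by (intro sum.cong refl) (simp only: mult_ac)
  have Fn: "4 * F n n = 1/2 * quad_op Th 2 f m"
    unfolding F_def dT_dT using Tc0_n
    by (simp add: quad_op_def oddi_def mu_def Tvar_def numeral_2_eq_2 lessThan_Suc)
  have Fa: "(4 * real n - 4) * F a (n - a) = 1 / real N * dv (Tv (2*a-1)) (dv (Tv (2*(n-a)-1)) f) m"
    if "a \<in> {1..n-1}" for a
    using L1_pair_term[OF n that] unfolding F_def N_def .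
  show ?thesis
    unfolding Q0 eta_inv_sum[OF n] Fn sum_distrib_left N_def quad_Tv_1[OF n] using Fa
    by (simp add: N_def)
qed

lemma L1_eq_V:
  assumes n: "2 \<le> n"
  shows "L1 n f m = Vop n 1 f m"
proof -
  obtain B where B: "supp_below B m" using supp_below_exists by blast
  have raising: "Sum_any (\<lambda>(a,p). if a \<in> {1..n} then (real p + 1/2 + mu n a) * (real p + 3/2 + mu n a)
                   * mT n a p (dT n a (p + 1) f) m else 0)
      = 1 / real (2*n-2) * euler_op Tv (2*n-2) B f m + 1 / 2 * euler_op Th 2 B f m"
  proof -
    have coeff: "pochhammer (real p + kappa n a) (Suc 1) = (real p + 1/2 + mu n a) * (real p + 3/2 + mu n a)"
      for p a by (simp add: pochhammer_Suc kappa_def algebra_simps)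
    show ?thesis using raising_operator[OF n B, of 1 f, unfolded coeff] by simp
  qed
  show ?thesis using Vop_normal_form[OF n order.refl B, of f]
    unfolding L1_def raising L1_quadratic_part[OF n] vir_op_def by simp
qed

lemma L2_pair_term:
  assumes n: "2 \<le> n" and a: "a \<in> {1..n-1}"
  shows "(4 * real n - 4) * ((1/2 - mu n a) * (1/2 - mu n (n-a)) * (3/2 - mu n (n-a)) * dT n a 1 (dT n (n-a) 0 f) m)
       = 2 / real (2*n-2) * dv (Tv ((2*n-2) + 2*a-1)) (dv (Tv (2*(n-a)-1)) f) m"
proof -
  define N where "N = 2 * n - 2"
  have Nr: "real N = 2 * real n - 2" using n unfolding N_def by (simp add: of_nat_diff)
  have N0: "real N \<noteq> 0" using n Nr by simp
  have a1: "1 \<le> a" "a < n" "1 \<le> n - a" "n - a < n" using a n by auto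
  have aS: "a \<in> {1..n}" using a1 by auto
  have t0: "Tc n a 0 = 2 * real a - 1" using Tc0_lt[OF n a1(1,2)] .
  have t1: "Tc n a 1 = (1 + (2 * real a - 1) / real N) * (2 * real a - 1)"
    using Tc_Suc[OF n aS, of 0] t0 kappa_lt[OF n a1(2)] Nr by simp
  have t2: "Tc n (n-a) 0 = 2 * real (n-a) - 1" using Tc0_lt[OF n a1(3,4)] .
  have c1: "1/2 - mu n (n-a) = (2 * real a - 1) / real N" "3/2 - mu n (n-a) = 1 + (2 * real a - 1) / real N"
    using a1 n by (auto simp: mu_def of_nat_diff Nr field_simps)
  have c2: "1/2 - mu n a = (2 * real (n-a) - 1) / real N"
    using a1 n by (auto simp: mu_def of_nat_diff Nr field_simps)
  have p1: "2 * real a - 1 \<noteq> 0" "2 * real (n-a) - 1 \<noteq> 0" "1 + (2 * real a - 1) / real N \<noteq> 0"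
    using a1 Nr n by (auto simp: field_simps)
  have g: "(2 * N') * ((y / N') * (x / N') * z * (D / ((z * x) * y))) = 2 / N' * D"
    if "x \<noteq> 0" "y \<noteq> 0" "z \<noteq> 0" "N' \<noteq> 0" for x y z N' D :: real
    using that by (simp add: field_simps)
  have e4: "4 * real n - 4 = 2 * real N" using Nr by simp
  have tv: "Tvar n a 1 = Tv ((2*n-2) + 2*a-1)" "Tvar n (n-a) 0 = Tv (2*(n-a)-1)" using a1 by (auto simp: Tvar_def)
  show ?thesis unfolding N_def[symmetric] dT_dT t1 t2 c1 c2 e4 tv
    by (rule g) (use p1 N0 in auto)
qed

lemma L2_quadratic_part:
  assumes n: "2 \<le> n"
  shows "(\<Sum>a\<in>{1..n}. \<Sum>b\<in>{1..n}. eta_inv n a b * (1/2 - mu n a) * (1/2 - mu n b) * (3/2 - mu n b)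
                   * dT n a 1 (dT n b 0 f) m)
      = 1 / real (2*n-2) * quad_op Tv ((2*n-2) * 2) f m + 1/2 * quad_op Th (2 * 2) f m"
proof -
  define N where "N = 2 * n - 2"
  define F where "F = (\<lambda>a b. (1/2 - mu n a) * (1/2 - mu n b) * (3/2 - mu n b) * dT n a 1 (dT n b 0 f) m)"
  have Q0: "(\<Sum>a\<in>{1..n}. \<Sum>b\<in>{1..n}. eta_inv n a b * (1/2 - mu n a) * (1/2 - mu n b) * (3/2 - mu n b)
                   * dT n a 1 (dT n b 0 f) m)
      = (\<Sum>a\<in>{1..n}. \<Sum>b\<in>{1..n}. eta_inv n a b * F a b)"
    unfolding F_def by (intro sum.cong refl) (simp only: mult_ac)
  have Tn1: "Tc n n 1 = 3/2" using Tc_Suc[OF n, of n 0] Tc0_n n by (simp add: kappa_n)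
  have Fn: "4 * F n n = 1/2 * quad_op Th (2 * 2) f m"
  proof -
    have "quad_op Th (2 * 2) f m = dv (Th 1) (dv (Th 3) f) m + dv (Th 3) (dv (Th 1) f) m"
      by (simp add: quad_op_def oddi_def lessThan_nat_numeral)
    also have "\<dots> = 2 * dv (Th 3) (dv (Th 1) f) m" using dv_dv_comm[of "Th 1" "Th 3" f m] by simp
    finally have q: "quad_op Th (2 * 2) f m = 2 * dv (Th 3) (dv (Th 1) f) m" .
    have tv: "Tvar n n 1 = Th 3" "Tvar n n 0 = Th 1" by (simp_all add: Tvar_def)
    show ?thesis unfolding F_def dT_dT Tn1 Tc0_n tv q by (simp add: mu_def)
  qed
  have Fa: "(4 * real n - 4) * F a (n - a) = 2 / real N * dv (Tv ((2*n-2) + 2*a-1)) (dv (Tv (2*(n-a)-1)) f) m"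
    if "a \<in> {1..n-1}" for a
    using L2_pair_term[OF n that] unfolding F_def N_def .
  show ?thesis
    unfolding Q0 eta_inv_sum[OF n] Fn sum_distrib_left N_def quad_Tv_2[OF n] using Fa
    by (simp add: N_def sum_distrib_left)
qed

lemma L2_eq_V:
  assumes n: "2 \<le> n"
  shows "L2 n f m = Vop n 2 f m"
proof -
  obtain B where B: "supp_below B m" using supp_below_exists by blast
  have raising: "Sum_any (\<lambda>(a,p). if a \<in> {1..n} then (real p + 1/2 + mu n a) * (real p + 3/2 + mu n a)
                   * (real p + 5/2 + mu n a) * mT n a p (dT n a (p + 2) f) m else 0)
      = 1 / real (2*n-2) * euler_op Tv ((2*n-2) * 2) B f m + 1 / 2 * euler_op Th (2 * 2) B f m"
  proof -
    have coeff: "pochhammer (real p + kappa n a) (Suc 2)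
        = (real p + 1/2 + mu n a) * (real p + 3/2 + mu n a) * (real p + 5/2 + mu n a)"
      for p a by (simp add: pochhammer_Suc numeral_2_eq_2 kappa_def algebra_simps)
    show ?thesis using raising_operator[OF n B, of 2 f, unfolded coeff] by simp
  qed
  show ?thesis using Vop_normal_form[OF n _ B, of 2 f]
    unfolding L2_def raising L2_quadratic_part[OF n] vir_op_def by simp
qed

text \<open>The recursively defined \<open>L_{j+1} = [L_1, L_j]/(1 - j)\<close> agree with \<open>V_{j+1}\<close>, by induction from \<open>L_1 = V_1\<close>, \<open>L_2 = V_2\<close>
  and the Virasoro relation for \<open>V\<close>.\<close>

lemma Lhi_eq_V:
  assumes n: "2 \<le> n"
  shows "Lhi n k = Vop n (int k + 2)"
proof (induction k)
  case 0
  show ?case by (rule ext, rule ext) (simp add: L2_eq_V[OF n])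
next
  case (Suc k)
  have L1_V1: "L1 n = Vop n 1" by (rule ext, rule ext) (rule L1_eq_V[OF n])
  show ?case
  proof (rule ext, rule ext)
    fix f m
    have virasoro: "comm (Vop n 1) (Vop n (int (k + 2))) f m = (1 - real (k + 2)) * Vop n (int (k + 2 + 1)) f m"
      by (rule Vop_virasoro_comm[OF n]) simp
    have nonzero: "1 - (real k + 2) \<noteq> 0" by simp
    have index_shift: "int k + 2 = int (k + 2)" "int (k + 2 + 1) = int (Suc k) + 2" by simp_all
    show "Lhi n (Suc k) f m = Vop n (int (Suc k) + 2) f m"
      using virasoro nonzero unfolding Lhi.simps L1_V1 Suc.IH index_shift by simp
  qed
qed

theorem lemma6p3:
  fixes n :: nat and j :: int
  assumes "n \<ge> 3" and "j \<ge> -1"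
  shows "Lop n j = Vop n j"
proof -
  have n: "2 \<le> n" using assms(1) by simp
  consider (m1) "j = -1" | (zero) "j = 0" | (one) "j = 1" | (higher) "j \<ge> 2" using assms(2) by linarith
  then show ?thesis
  proof cases
    case m1
    then show ?thesis unfolding Lop_def by (intro ext) (simp add: Lm1_eq_V[OF n])
  next
    case zero
    then show ?thesis unfolding Lop_def by (intro ext) (simp add: L0_eq_V[OF n])
  next
    case one
    then show ?thesis unfolding Lop_def by (intro ext) (simp add: L1_eq_V[OF n])
  next
    case higher
    then have "int (nat (j - 2)) + 2 = j" by simp
    then show ?thesis unfolding Lop_def Lhi_eq_V[OF n] using higher by simp
  qed
qed

end
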